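(* Let $G=(V,E)$ be a finite oriented 2-edge-connected subcubic graph (parallel edges allowed, no loops) with a root vertex $u$ of degree $2$. Let $\mu : V \rightarrow \mathbb{Z}_3$, and for $k=2,3$ let $\psi_k : \delta(u) \rightarrow \mathbb{Z}_k$. Suppose that (i) $\sum_{v \in V} \mu(v) = 0$; (ii) $\mathrm{supp}(\mu) \subseteq V_2(G)$; (iii) $\partial \psi_3(u) = \mu(u)$; (iv) $\partial \psi_2(u) = 0$ if $\mu(u) = 0$; (v) $(\psi_2(e), \psi_3(e)) \neq (0,0)$ for every $e \in \delta(u)$. Then there exist functions $\varphi_k : E \rightarrow \mathbb{Z}_k$ for $k=2,3$ such that (1) $\varphi_k|_{\delta(u)} = \psi_k$ for $k=2,3$; (2) $\partial \varphi_3 = \mu$; (3) for every vertex $v \in V$, $\partial \varphi_2(v) = 0$ whenever $\mu(v) = 0$; (4) $(\varphi_2(e), \varphi_3(e)) \neq (0,0)$ for every $e \in E$.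
   Context: Graphs may have parallel edges but no loops. For a vertex $v$, $\delta(v)$ is the set of edges incident with $v$, $\delta^+(v)$ the set of edges directed away from $v$, and $\delta^-(v)$ the set of edges directed toward $v$. $V_t(G)$ denotes the set of vertices of degree $t$ in $G$; $G$ is subcubic if every vertex has degree at most $3$. For a function $\varphi$ defined on a set of edges containing all edges incident with $v$ and taking values in $\mathbb{Z}_k$, the boundary at $v$ is $\partial \varphi(v) = \sum_{e \in \delta^+(v)} \varphi(e) - \sum_{e \in \delta^-(v)} \varphi(e)$; in particular $\partial\psi_k(u)$ is defined for $\psi_k : \delta(u)\to\mathbb{Z}_k$, and for $\varphi : E \to \mathbb{Z}_k$, $\partial\varphi : V \to \mathbb{Z}_k$. $\mathrm{supp}(\mu)$ is the set of vertices $v$ with $\mu(v) \neq 0$. *)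

theory Defs
  imports Main "HOL-Library.Numeral_Type"
begin

text \<open>Z_2 and Z_3 are the types 2 and 3 of HOL-Library.Numeral_Type.\<close>

definition oriented_graph :: "'v set \<Rightarrow> 'e set \<Rightarrow> ('e \<Rightarrow> 'v) \<Rightarrow> ('e \<Rightarrow> 'v) \<Rightarrow> bool" where
  "oriented_graph V E tail head \<longleftrightarrow> finite V \<and> finite E \<and>
     (\<forall>e\<in>E. tail e \<in> V \<and> head e \<in> V \<and> tail e \<noteq> head e)"

definition delta :: "'e set \<Rightarrow> ('e \<Rightarrow> 'v) \<Rightarrow> ('e \<Rightarrow> 'v) \<Rightarrow> 'v \<Rightarrow> 'e set" where
  "delta E tail head v = {e\<in>E. tail e = v \<or> head e = v}"

definition delta_out :: "'e set \<Rightarrow> ('e \<Rightarrow> 'v) \<Rightarrow> 'v \<Rightarrow> 'e set" where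
  "delta_out E tail v = {e\<in>E. tail e = v}"

definition delta_in :: "'e set \<Rightarrow> ('e \<Rightarrow> 'v) \<Rightarrow> 'v \<Rightarrow> 'e set" where
  "delta_in E head v = {e\<in>E. head e = v}"

definition degree :: "'e set \<Rightarrow> ('e \<Rightarrow> 'v) \<Rightarrow> ('e \<Rightarrow> 'v) \<Rightarrow> 'v \<Rightarrow> nat" where
  "degree E tail head v = card (delta E tail head v)"

definition subcubic :: "'v set \<Rightarrow> 'e set \<Rightarrow> ('e \<Rightarrow> 'v) \<Rightarrow> ('e \<Rightarrow> 'v) \<Rightarrow> bool" where
  "subcubic V E tail head \<longleftrightarrow> (\<forall>v\<in>V. degree E tail head v \<le> 3)"

definition boundary :: "'e set \<Rightarrow> ('e \<Rightarrow> 'v) \<Rightarrow> ('e \<Rightarrow> 'v) \<Rightarrow> ('e \<Rightarrow> 'a::ab_group_add) \<Rightarrow> 'v \<Rightarrow> 'a" where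
  "boundary E tail head phi v = (\<Sum>e\<in>delta_out E tail v. phi e) - (\<Sum>e\<in>delta_in E head v. phi e)"

definition adj :: "'e set \<Rightarrow> ('e \<Rightarrow> 'v) \<Rightarrow> ('e \<Rightarrow> 'v) \<Rightarrow> ('v \<times> 'v) set" where
  "adj F tail head = {(x, y). \<exists>e\<in>F. (tail e = x \<and> head e = y) \<or> (tail e = y \<and> head e = x)}"

definition connected_by :: "'v set \<Rightarrow> 'e set \<Rightarrow> ('e \<Rightarrow> 'v) \<Rightarrow> ('e \<Rightarrow> 'v) \<Rightarrow> bool" where
  "connected_by V F tail head \<longleftrightarrow> (\<forall>x\<in>V. \<forall>y\<in>V. (x, y) \<in> (adj F tail head)\<^sup>*)"

definition two_edge_connected :: "'v set \<Rightarrow> 'e set \<Rightarrow> ('e \<Rightarrow> 'v) \<Rightarrow> ('e \<Rightarrow> 'v) \<Rightarrow> bool" where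
  "two_edge_connected V E tail head \<longleftrightarrow> connected_by V E tail head \<and>
     (\<forall>e\<in>E. connected_by V (E - {e}) tail head)"

end

theory Submission
  imports Defs
begin

text \<open>
  Induction on the number of edges. If every edge is incident with the root u there are only two
  vertices and the prescriptions already work. Otherwise one of five configurations occurs, each of
  which reduces the problem to smaller instances:
  a 2-edge-cut with an edge on each side (solve the side of u with the other side contracted to a
  vertex, then the other side with the side of u contracted into u, prescribed by the first
  solution); a neighbour x of u of degree 2 (contract the edge ux and make x the root, with the
  prescription on the second edge at x adjusted); a degree-2 vertex that can be merged into a
  neighbour; a degree-2 vertex s of nonzero weight between two vertices of degree 3 (delete s and
  give both neighbours weight -mu(s), which keeps the total weight since 3 = 0 in Z_3); and, when
  all vertices but u have degree 3 and all weights vanish, an edge between two degree-3 vertices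
  (delete it and later give it the Z_3-value 1). Without nontrivial 2-edge-cuts these deletions
  keep the graph 2-edge-connected, as one sees from the characterisation of 2-edge-connectivity by
  edge cuts.
\<close>

section \<open>Arithmetic in Z_2 and Z_3\<close>

lemma exhaust_2: "(x::2) = 0 \<or> x = 1"
proof (cases x)
  case (of_int z)
  then have "z = 0 \<or> z = 1" by auto
  then show ?thesis using of_int by auto
qed

lemma exhaust_3: "(x::3) = 0 \<or> x = 1 \<or> x = 2"
proof (cases x)
  case (of_int z)
  then have "z = 0 \<or> z = 1 \<or> z = 2" by auto
  then show ?thesis using of_int by auto
qed

lemma two_eq_zero_2: "(2::2) = 0"
  by simp

lemma add_self_2 [simp]: "(x::2) + x = 0"
  using exhaust_2[of x] by auto

lemma add_eq_0_iff_eq_2: "(a::2) + b = 0 \<longleftrightarrow> a = b"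
  using exhaust_2[of a] exhaust_2[of b] by auto

lemma mult_eq_0_3: "(a::3) \<noteq> 0 \<Longrightarrow> a * b = 0 \<Longrightarrow> b = 0"
  using exhaust_3[of a] exhaust_3[of b] by auto

lemma mult_nonzero_3: "(a::3) \<noteq> 0 \<Longrightarrow> b \<noteq> 0 \<Longrightarrow> a * b \<noteq> 0"
  using mult_eq_0_3 by blast

section \<open>Incidence and boundary\<close>

abbreviation joins :: "('e \<Rightarrow> 'v) \<Rightarrow> ('e \<Rightarrow> 'v) \<Rightarrow> 'e \<Rightarrow> 'v \<Rightarrow> 'v \<Rightarrow> bool" where
  "joins tail head e x y \<equiv> (tail e = x \<and> head e = y) \<or> (head e = x \<and> tail e = y)"

definition incidence :: "('e \<Rightarrow> 'v) \<Rightarrow> ('e \<Rightarrow> 'v) \<Rightarrow> 'v \<Rightarrow> 'e \<Rightarrow> 'a::comm_ring_1" where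
  "incidence tail head v e = (if tail e = v then 1 else 0) - (if head e = v then 1 else 0)"

text \<open>The boundary as a single sum over all edges: it avoids the split into outgoing and incoming
  edges and commutes with sums over vertices.\<close>

definition bnd :: "'e set \<Rightarrow> ('e \<Rightarrow> 'v) \<Rightarrow> ('e \<Rightarrow> 'v) \<Rightarrow> ('e \<Rightarrow> 'a::comm_ring_1) \<Rightarrow> 'v \<Rightarrow> 'a" where
  "bnd E tail head \<phi> v = (\<Sum>e\<in>E. incidence tail head v e * \<phi> e)"

lemma boundary_eq_bnd:
  "finite E \<Longrightarrow> boundary E tail head \<phi> v = bnd E tail head (\<phi>::'e \<Rightarrow> 'a::comm_ring_1) v"
  unfolding boundary_def delta_out_def delta_in_def bnd_def
  by (simp add: sum.inter_filter sum_subtractf[symmetric]) (rule sum.cong, auto simp: incidence_def)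

lemma incidence_nonincident: "tail e \<noteq> v \<Longrightarrow> head e \<noteq> v \<Longrightarrow> incidence tail head v e = 0"
  by (simp add: incidence_def)

lemma incidence_square:
  "tail e \<noteq> head e \<Longrightarrow> tail e = v \<or> head e = v \<Longrightarrow> incidence tail head v e * incidence tail head v e = 1"
  by (auto simp: incidence_def)

lemma incidence_2:
  "tail e \<noteq> head e \<Longrightarrow> tail e = v \<or> head e = v \<Longrightarrow> (incidence tail head v e :: 2) = 1"
  by (auto simp: incidence_def)

lemma incidence_joins:
  "joins tail head e a b \<Longrightarrow> a \<noteq> b \<Longrightarrow> incidence tail head b e = - incidence tail head a e"
  by (auto simp: incidence_def)

lemma sum_incidence:
  assumes "finite V" "tail e \<in> V" "head e \<in> V"
  shows "(\<Sum>w\<in>V. incidence tail head w e) = (0::'a::comm_ring_1)"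
  using assms by (simp add: incidence_def sum_subtractf sum.delta)

lemma bnd_cong:
  assumes "\<And>e. e \<in> E \<Longrightarrow> tail e = v \<or> head e = v \<Longrightarrow> \<phi> e = \<phi>' e"
  shows "bnd E tail head \<phi> v = bnd E tail head \<phi>' v"
  unfolding bnd_def
proof (rule sum.cong)
  fix e assume "e \<in> E"
  then show "incidence tail head v e * \<phi> e = incidence tail head v e * \<phi>' e"
    using assms[of e] by (cases "tail e = v \<or> head e = v") (auto simp: incidence_nonincident)
qed simp

lemma bnd_fun_upd_outside: "e0 \<notin> E \<Longrightarrow> bnd E tail head (\<phi>(e0 := x)) v = bnd E tail head \<phi> v"
  by (rule bnd_cong) auto

lemma bnd_insert:
  "finite E \<Longrightarrow> e0 \<notin> E \<Longrightarrow>
    bnd (insert e0 E) tail head \<phi> v = bnd E tail head \<phi> v + incidence tail head v e0 * \<phi> e0"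
  by (simp add: bnd_def add.commute)

lemma bnd_nonincident:
  "(\<And>e. e \<in> E \<Longrightarrow> tail e \<noteq> v \<and> head e \<noteq> v) \<Longrightarrow> bnd E tail head \<phi> v = 0"
  unfolding bnd_def by (rule sum.neutral) (auto simp: incidence_nonincident)

lemma bnd_degree_2:
  assumes "finite E" "delta E tail head v = {f, g}" "f \<noteq> g"
  shows "bnd E tail head \<phi> v = incidence tail head v f * \<phi> f + incidence tail head v g * \<phi> g"
proof -
  have "E = {f, g} \<union> (E - {f, g})" "{f, g} \<subseteq> E" using assms(2) by (auto simp: delta_def)
  then have "bnd E tail head \<phi> v = bnd {f, g} tail head \<phi> v + bnd (E - {f, g}) tail head \<phi> v"
    using assms(1) unfolding bnd_def by (metis Diff_disjoint finite_Diff sum.union_disjoint finite.emptyI finite.insertI)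
  also have "bnd (E - {f, g}) tail head \<phi> v = 0"
    using assms(2) by (intro bnd_nonincident) (auto simp: delta_def)
  finally show ?thesis using assms(3) by (simp add: bnd_def)
qed

lemma bnd_fiber:
  assumes "finite V" "finite E" "\<forall>e\<in>E. tail e \<in> V \<and> head e \<in> V"
  shows "(\<Sum>w\<in>{w\<in>V. r w = y}. bnd E tail head \<phi> w) =
    bnd {e\<in>E. r (tail e) \<noteq> r (head e)} (r \<circ> tail) (r \<circ> head) (\<phi>::'e\<Rightarrow>'a::comm_ring_1) y"
proof -
  have incidence_fiber: "(\<Sum>w\<in>{w\<in>V. r w = y}. incidence tail head w e) =
      (incidence (r \<circ> tail) (r \<circ> head) y e :: 'a)" if "e \<in> E" for e
    using that assms by (simp add: incidence_def sum_subtractf sum.delta)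
  have "(\<Sum>w\<in>{w\<in>V. r w = y}. bnd E tail head \<phi> w) =
      (\<Sum>e\<in>E. (\<Sum>w\<in>{w\<in>V. r w = y}. incidence tail head w e) * \<phi> e)"
    unfolding bnd_def by (subst sum.swap) (simp add: sum_distrib_right)
  also have "\<dots> = (\<Sum>e\<in>E. incidence (r \<circ> tail) (r \<circ> head) y e * \<phi> e)"
    by (intro sum.cong) (simp_all add: incidence_fiber)
  also have "\<dots> = (\<Sum>e\<in>E. if r (tail e) \<noteq> r (head e) then incidence (r \<circ> tail) (r \<circ> head) y e * \<phi> e else 0)"
    by (intro sum.cong) (auto simp: incidence_def)
  also have "\<dots> = bnd {e\<in>E. r (tail e) \<noteq> r (head e)} (r \<circ> tail) (r \<circ> head) \<phi> y"
    unfolding bnd_def using assms(2) by (simp add: sum.inter_filter)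
  finally show ?thesis .
qed

lemma sum_bnd:
  assumes "finite V" "finite E" "\<forall>e\<in>E. tail e \<in> V \<and> head e \<in> V"
  shows "(\<Sum>w\<in>V. bnd E tail head (\<phi>::'e\<Rightarrow>'a::comm_ring_1) w) = 0"
  using bnd_fiber[OF assms, where r="\<lambda>_. undefined" and y=undefined and \<phi>=\<phi>] by (simp add: bnd_def)
definition other_end :: "('e \<Rightarrow> 'v) \<Rightarrow> ('e \<Rightarrow> 'v) \<Rightarrow> 'v \<Rightarrow> 'e \<Rightarrow> 'v" where
  "other_end tail head v e = (if tail e = v then head e else tail e)"

lemma joins_other_end:
  "tail e \<noteq> head e \<Longrightarrow> tail e = v \<or> head e = v \<Longrightarrow> joins tail head e v (other_end tail head v e)"
  by (auto simp: other_end_def)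

lemma other_end_eq: "tail e \<noteq> head e \<Longrightarrow> joins tail head e a b \<Longrightarrow> other_end tail head a e = b"
  by (auto simp: other_end_def)

lemma delta_Diff: "delta (E - D) tail head v = delta E tail head v - D"
  by (auto simp: delta_def)

lemma bnd_Diff_nonincident:
  assumes "finite E" "\<And>e. e \<in> D \<Longrightarrow> tail e \<noteq> v \<and> head e \<noteq> v"
  shows "bnd (E - D) tail head \<phi> v = bnd E tail head \<phi> v"
  unfolding bnd_def using assms by (intro sum.mono_neutral_left) (auto simp: incidence_nonincident)

section \<open>Edge cuts and 2-edge-connectivity\<close>

definition cut_edges :: "'e set \<Rightarrow> ('e \<Rightarrow> 'v) \<Rightarrow> ('e \<Rightarrow> 'v) \<Rightarrow> 'v set \<Rightarrow> 'e set" where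
  "cut_edges E tail head X = {e\<in>E. (tail e \<in> X) \<noteq> (head e \<in> X)}"

lemma cut_edges_complement:
  "\<forall>e\<in>E. tail e \<in> V \<and> head e \<in> V \<Longrightarrow> cut_edges E tail head (V - X) = cut_edges E tail head X"
  unfolding cut_edges_def by auto

lemma cut_edges_Diff: "cut_edges (E - D) tail head X = cut_edges E tail head X - D"
  unfolding cut_edges_def by auto

lemma cut_edges_subset: "cut_edges E tail head X \<subseteq> E"
  unfolding cut_edges_def by auto

lemma finite_cut_edges: "finite E \<Longrightarrow> finite (cut_edges E tail head X)"
  unfolding cut_edges_def by simp

lemma finite_delta: "finite E \<Longrightarrow> finite (delta E tail head v)"
  by (simp add: delta_def)

lemma adj_path_crosses:
  assumes "(x, y) \<in> (adj F tail head)\<^sup>*" "x \<in> X" "y \<notin> X"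
  shows "cut_edges F tail head X \<noteq> {}"
  using assms
proof (induction rule: rtrancl_induct)
  case (step y z)
  show ?case
  proof (cases "y \<in> X")
    case True
    from step.hyps(2) obtain e where "e \<in> F" "joins tail head e y z"
      unfolding adj_def by blast
    then show ?thesis using True step.prems(2) by (auto simp: cut_edges_def)
  qed (use step.IH step.prems(1) in blast)
qed simp

lemma reachable_set_cut_empty:
  "cut_edges F tail head {z. (x, z) \<in> (adj F tail head)\<^sup>*} = {}"
proof -
  have "(x, head e) \<in> (adj F tail head)\<^sup>*"
    if "e \<in> F" "(x, tail e) \<in> (adj F tail head)\<^sup>*" for e
    by (rule rtrancl_into_rtrancl[OF that(2)]) (use that in \<open>auto simp: adj_def\<close>)
  moreover have "(x, tail e) \<in> (adj F tail head)\<^sup>*"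
    if "e \<in> F" "(x, head e) \<in> (adj F tail head)\<^sup>*" for e
    by (rule rtrancl_into_rtrancl[OF that(2)]) (use that in \<open>auto simp: adj_def\<close>)
  ultimately show ?thesis unfolding cut_edges_def by (auto simp del: Collect_mem_eq)
qed

lemma connected_by_iff_cuts:
  assumes "\<forall>e\<in>F. tail e \<in> V \<and> head e \<in> V"
  shows "connected_by V F tail head \<longleftrightarrow>
    (\<forall>X\<subseteq>V. X \<noteq> {} \<longrightarrow> X \<noteq> V \<longrightarrow> cut_edges F tail head X \<noteq> {})"
proof (intro iffI allI impI)
  fix X assume "connected_by V F tail head" "X \<subseteq> V" "X \<noteq> {}" "X \<noteq> V"
  then obtain x y where "x \<in> X" "y \<notin> X" "(x, y) \<in> (adj F tail head)\<^sup>*"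
    unfolding connected_by_def by blast
  then show "cut_edges F tail head X \<noteq> {}" using adj_path_crosses by metis
next
  assume cuts: "\<forall>X\<subseteq>V. X \<noteq> {} \<longrightarrow> X \<noteq> V \<longrightarrow> cut_edges F tail head X \<noteq> {}"
  show "connected_by V F tail head"
    unfolding connected_by_def
  proof (intro ballI)
    fix x y assume xy: "x \<in> V" "y \<in> V"
    define X where "X = {z\<in>V. (x, z) \<in> (adj F tail head)\<^sup>*}"
    have "X = V \<inter> {z. (x, z) \<in> (adj F tail head)\<^sup>*}" by (auto simp: X_def)
    then have "cut_edges F tail head X = {}"
      using reachable_set_cut_empty[of F tail head x] assms by (auto simp: cut_edges_def)
    moreover have "x \<in> X" "X \<subseteq> V" using xy by (auto simp: X_def)
    ultimately have "X = V" using cuts by blast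
    then show "(x, y) \<in> (adj F tail head)\<^sup>*" using xy by (auto simp: X_def)
  qed
qed

lemma two_edge_connected_iff_cuts:
  assumes "oriented_graph V E tail head"
  shows "two_edge_connected V E tail head \<longleftrightarrow>
    (\<forall>X\<subseteq>V. X \<noteq> {} \<longrightarrow> X \<noteq> V \<longrightarrow> 2 \<le> card (cut_edges E tail head X))"
proof -
  have ends: "\<forall>e\<in>E - D. tail e \<in> V \<and> head e \<in> V" for D
    using assms by (auto simp: oriented_graph_def)
  have card_ge_2: "2 \<le> card (cut_edges E tail head X) \<longleftrightarrow>
      cut_edges E tail head X \<noteq> {} \<and> (\<forall>e\<in>E. cut_edges E tail head X - {e} \<noteq> {})" for X
  proof -
    have fin: "finite (cut_edges E tail head X)"
      using assms by (simp add: oriented_graph_def finite_cut_edges)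
    have "2 \<le> card (cut_edges E tail head X) \<longleftrightarrow>
        \<not> (\<forall>a\<in>cut_edges E tail head X. \<forall>b\<in>cut_edges E tail head X. a = b)"
      using card_le_Suc0_iff_eq[OF fin] by linarith
    also have "\<dots> \<longleftrightarrow> cut_edges E tail head X \<noteq> {} \<and> (\<forall>e\<in>E. cut_edges E tail head X - {e} \<noteq> {})"
      using cut_edges_subset[of E tail head X] by blast
    finally show ?thesis .
  qed
  have ends': "\<forall>e\<in>E. tail e \<in> V \<and> head e \<in> V" using ends[of "{}"] by simp
  show ?thesis
    unfolding two_edge_connected_def card_ge_2 connected_by_iff_cuts[OF ends'] connected_by_iff_cuts[OF ends]
      cut_edges_Diff
    by blast
qed

lemma two_edge_connectedD:
  "oriented_graph V E tail head \<Longrightarrow> two_edge_connected V E tail head \<Longrightarrow>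
    X \<subseteq> V \<Longrightarrow> X \<noteq> {} \<Longrightarrow> X \<noteq> V \<Longrightarrow> 2 \<le> card (cut_edges E tail head X)"
  by (simp add: two_edge_connected_iff_cuts)

lemma two_edge_connectedI:
  "oriented_graph V E tail head \<Longrightarrow>
    (\<And>X. X \<subseteq> V \<Longrightarrow> X \<noteq> {} \<Longrightarrow> X \<noteq> V \<Longrightarrow> 2 \<le> card (cut_edges E tail head X)) \<Longrightarrow>
    two_edge_connected V E tail head"
  by (simp add: two_edge_connected_iff_cuts)
lemma cut_edges_singleton:
  "\<forall>e\<in>E. tail e \<noteq> head e \<Longrightarrow> cut_edges E tail head {v} = delta E tail head v"
  unfolding cut_edges_def delta_def by auto

lemma two_le_degree:
  assumes G: "oriented_graph V E tail head" and T: "two_edge_connected V E tail head"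
    and "v \<in> V" "w \<in> V" "w \<noteq> v"
  shows "2 \<le> degree E tail head v"
proof -
  have "2 \<le> card (cut_edges E tail head {v})"
    by (rule two_edge_connectedD[OF G T]) (use assms(3-5) in auto)
  then show ?thesis
    using G cut_edges_singleton[of E tail head v] by (simp add: oriented_graph_def degree_def)
qed

lemma parallel_edges_span:
  assumes G: "oriented_graph V E tail head" and T: "two_edge_connected V E tail head"
    and S: "subcubic V E tail head" and dv: "delta E tail head v = {f, g}" "f \<noteq> g"
    and f: "joins tail head f v p" and g: "joins tail head g v p"
  shows "V \<subseteq> {v, p}"
proof -
  have fin: "finite E" and ends: "\<forall>e\<in>E. tail e \<in> V \<and> head e \<in> V"
    using G by (auto simp: oriented_graph_def)
  have fg: "f \<in> E" "g \<in> E" using dv by (auto simp: delta_def)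
  then have vp: "v \<in> V" "p \<in> V" using ends f by auto
  have "cut_edges E tail head {v, p} \<subseteq> delta E tail head p - {f, g}"
    using dv f g by (auto simp: cut_edges_def delta_def)
  moreover have "card (delta E tail head p - {f, g}) \<le> 1"
  proof -
    have "card (delta E tail head p) \<le> 3" "{f, g} \<subseteq> delta E tail head p"
      using S vp fg f g by (auto simp: subcubic_def degree_def delta_def)
    then show ?thesis using dv(2) by (simp add: card_Diff_subset)
  qed
  ultimately have small: "card (cut_edges E tail head {v, p}) \<le> 1"
    by (meson card_mono finite_Diff finite_delta[OF fin] le_trans)
  show ?thesis
  proof (rule ccontr)
    assume "\<not> V \<subseteq> {v, p}"
    then have "2 \<le> card (cut_edges E tail head {v, p})"
      by (intro two_edge_connectedD[OF G T]) (use vp in auto)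
    then show False using small by simp
  qed
qed

section \<open>Contracting a vertex set\<close>

definition quotient_edges :: "'e set \<Rightarrow> ('e \<Rightarrow> 'v) \<Rightarrow> ('e \<Rightarrow> 'v) \<Rightarrow> ('v \<Rightarrow> 'v) \<Rightarrow> 'e set" where
  "quotient_edges E tail head r = {e\<in>E. r (tail e) \<noteq> r (head e)}"

lemma oriented_graph_quotient:
  "oriented_graph V E tail head \<Longrightarrow>
    oriented_graph (r ` V) (quotient_edges E tail head r) (r \<circ> tail) (r \<circ> head)"
  unfolding oriented_graph_def quotient_edges_def by auto

lemma cut_edges_quotient:
  assumes "\<forall>e\<in>E. tail e \<in> V \<and> head e \<in> V"
  shows "cut_edges (quotient_edges E tail head r) (r \<circ> tail) (r \<circ> head) X =
    cut_edges E tail head {w\<in>V. r w \<in> X}"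
  using assms unfolding cut_edges_def quotient_edges_def by auto

lemma two_edge_connected_quotient:
  assumes G: "oriented_graph V E tail head" and T: "two_edge_connected V E tail head"
  shows "two_edge_connected (r ` V) (quotient_edges E tail head r) (r \<circ> tail) (r \<circ> head)"
proof (rule two_edge_connectedI[OF oriented_graph_quotient[OF G]])
  fix X assume X: "X \<subseteq> r ` V" "X \<noteq> {}" "X \<noteq> r ` V"
  have ends: "\<forall>e\<in>E. tail e \<in> V \<and> head e \<in> V" using G by (simp add: oriented_graph_def)
  have "2 \<le> card (cut_edges E tail head {w\<in>V. r w \<in> X})"
    by (rule two_edge_connectedD[OF G T]) (use X in auto)
  then show "2 \<le> card (cut_edges (quotient_edges E tail head r) (r \<circ> tail) (r \<circ> head) X)"
    by (simp add: cut_edges_quotient[OF ends])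
qed

lemma card_quotient_edges_less:
  "finite E \<Longrightarrow> e \<in> E \<Longrightarrow> r (tail e) = r (head e) \<Longrightarrow> card (quotient_edges E tail head r) < card E"
  unfolding quotient_edges_def by (intro psubset_card_mono) auto

definition collapse :: "'v set \<Rightarrow> 'v \<Rightarrow> 'v \<Rightarrow> 'v" where
  "collapse S z w = (if w \<in> S then z else w)"

definition collapse_weight :: "'v set \<Rightarrow> 'v \<Rightarrow> ('v \<Rightarrow> 'a::comm_monoid_add) \<Rightarrow> 'v \<Rightarrow> 'a" where
  "collapse_weight S z \<mu> w = (if w = z then sum \<mu> (insert z S) else \<mu> w)"

lemma collapse_image: "S \<subseteq> V \<Longrightarrow> z \<in> V \<Longrightarrow> collapse S z ` V = insert z (V - S)"
  unfolding collapse_def by auto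

lemma collapse_eq_iff: "collapse S z w = y \<longleftrightarrow> (if y = z then w \<in> insert z S else w = y \<and> w \<notin> S)"
  unfolding collapse_def by auto

lemma quotient_edges_collapse:
  "\<forall>e\<in>E. tail e \<noteq> head e \<Longrightarrow> quotient_edges E tail head (collapse S z) =
    {e\<in>E. \<not> (tail e \<in> insert z S \<and> head e \<in> insert z S)}"
  unfolding quotient_edges_def collapse_def by auto

lemma delta_collapse_outside:
  "\<forall>e\<in>E. tail e \<noteq> head e \<Longrightarrow> y \<notin> S \<Longrightarrow> y \<noteq> z \<Longrightarrow>
    delta (quotient_edges E tail head (collapse S z)) (collapse S z \<circ> tail) (collapse S z \<circ> head) y =
    delta E tail head y"
  unfolding delta_def quotient_edges_def collapse_def by auto

lemma delta_collapse_target: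
  "delta (quotient_edges E tail head (collapse S z)) (collapse S z \<circ> tail) (collapse S z \<circ> head) z =
    cut_edges E tail head (insert z S)"
  unfolding delta_def quotient_edges_def collapse_def cut_edges_def by auto

lemma sum_collapse_weight:
  assumes "finite V" "S \<subseteq> V" "z \<in> V"
  shows "sum (collapse_weight S z \<mu>) (insert z (V - S)) = sum \<mu> V"
proof -
  have "insert z (V - S) = insert z (V - insert z S)" by auto
  then have "sum (collapse_weight S z \<mu>) (insert z (V - S)) =
      sum \<mu> (insert z S) + sum (collapse_weight S z \<mu>) (V - insert z S)"
    using assms(1) by (simp add: collapse_weight_def)
  also have "sum (collapse_weight S z \<mu>) (V - insert z S) = sum \<mu> (V - insert z S)"
    by (rule sum.cong) (auto simp: collapse_weight_def)
  also have "sum \<mu> (insert z S) + sum \<mu> (V - insert z S) = sum \<mu> V"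
    using assms sum.subset_diff[of "insert z S" V \<mu>] by (simp add: add.commute)
  finally show ?thesis .
qed

lemma bnd_collapse:
  assumes G: "oriented_graph V E tail head" and "S \<subseteq> V" "z \<in> V" "y \<in> insert z (V - S)"
  shows "bnd (quotient_edges E tail head (collapse S z)) (collapse S z \<circ> tail) (collapse S z \<circ> head) \<phi> y =
    collapse_weight S z (bnd E tail head (\<phi>::'e \<Rightarrow> 'a::comm_ring_1)) y"
proof -
  have fin: "finite V" "finite E" and ends: "\<forall>e\<in>E. tail e \<in> V \<and> head e \<in> V"
    using G by (auto simp: oriented_graph_def)
  note fiber = bnd_fiber[OF fin ends, where r = "collapse S z" and y = y and \<phi> = \<phi>,
      folded quotient_edges_def]
  show ?thesis
  proof (cases "y = z")
    case True
    then have "{w\<in>V. collapse S z w = y} = insert z S" using assms(2,3) by (auto simp: collapse_eq_iff)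
    then show ?thesis using fiber True by (simp add: collapse_weight_def)
  next
    case False
    then have "{w\<in>V. collapse S z w = y} = {y}" using assms(4) by (auto simp: collapse_eq_iff)
    then show ?thesis using fiber False by (simp add: collapse_weight_def)
  qed
qed

lemma bnd_collapse_agree_off:
  assumes G: "oriented_graph V E tail head" and "S \<subseteq> V" "z \<in> V" "y \<in> insert z (V - S)"
    and e: "tail e \<in> insert z S" "head e \<in> insert z S" and agree: "\<And>e'. e' \<noteq> e \<Longrightarrow> \<phi>' e' = \<phi> e'"
  shows "bnd (quotient_edges E tail head (collapse S z)) (collapse S z \<circ> tail) (collapse S z \<circ> head) \<phi> y =
    collapse_weight S z (bnd E tail head (\<phi>'::'e \<Rightarrow> 'a::comm_ring_1)) y"
proof -
  have "e \<notin> quotient_edges E tail head (collapse S z)"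
    using e by (auto simp: quotient_edges_def collapse_def)
  then have "bnd (quotient_edges E tail head (collapse S z)) (collapse S z \<circ> tail) (collapse S z \<circ> head) \<phi> y =
      bnd (quotient_edges E tail head (collapse S z)) (collapse S z \<circ> tail) (collapse S z \<circ> head) \<phi>' y"
    using agree by (intro bnd_cong) metis
  then show ?thesis using bnd_collapse[OF assms(1-4)] by simp
qed

section \<open>Nontrivial 2-edge-cuts and deletions\<close>

definition nontrivial_2_cut :: "'v set \<Rightarrow> 'e set \<Rightarrow> ('e \<Rightarrow> 'v) \<Rightarrow> ('e \<Rightarrow> 'v) \<Rightarrow> bool" where
  "nontrivial_2_cut V E tail head \<longleftrightarrow> (\<exists>X\<subseteq>V. card (cut_edges E tail head X) \<le> 2 \<and>
      (\<exists>e\<in>E. tail e \<in> X \<and> head e \<in> X) \<and> (\<exists>e\<in>E. tail e \<in> V - X \<and> head e \<in> V - X))"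

lemma nontrivial_2_cut_containing:
  assumes "oriented_graph V E tail head" "nontrivial_2_cut V E tail head" "u \<in> V"
  obtains X where "X \<subseteq> V" "u \<in> X" "card (cut_edges E tail head X) \<le> 2"
    "\<exists>e\<in>E. tail e \<in> X \<and> head e \<in> X" "\<exists>e\<in>E. tail e \<in> V - X \<and> head e \<in> V - X"
proof -
  obtain X where X: "X \<subseteq> V" "card (cut_edges E tail head X) \<le> 2"
    "\<exists>e\<in>E. tail e \<in> X \<and> head e \<in> X" "\<exists>e\<in>E. tail e \<in> V - X \<and> head e \<in> V - X"
    using assms(2) unfolding nontrivial_2_cut_def by blast
  have ends: "\<forall>e\<in>E. tail e \<in> V \<and> head e \<in> V" using assms(1) by (simp add: oriented_graph_def)
  show thesis
  proof (cases "u \<in> X")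
    case True then show thesis using that X by blast
  next
    case False
    have "V - (V - X) = X" using X(1) by blast
    then show thesis
      using that[of "V - X"] X False assms(3) cut_edges_complement[OF ends, of X] by auto
  qed
qed

text \<open>A degree-3 vertex cannot have all its edges in a cut of size at most 2.\<close>

lemma inner_edge_at_degree_3:
  assumes "finite E" "c \<in> X" "degree E tail head c = 3" "card (cut_edges E tail head X) \<le> 2"
  shows "\<exists>h\<in>E. tail h \<in> X \<and> head h \<in> X"
proof -
  have "\<not> delta E tail head c \<subseteq> cut_edges E tail head X"
  proof
    assume "delta E tail head c \<subseteq> cut_edges E tail head X"
    then have "card (delta E tail head c) \<le> card (cut_edges E tail head X)"
      by (rule card_mono[OF finite_cut_edges[OF assms(1)]])
    then show False using assms(3,4) by (simp add: degree_def)
  qed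
  then obtain h where "h \<in> delta E tail head c" "h \<notin> cut_edges E tail head X" by blast
  then show ?thesis using assms(2) by (auto simp: delta_def cut_edges_def)
qed

lemma two_edge_connected_delete_edge:
  assumes G: "oriented_graph V E tail head" and T: "two_edge_connected V E tail head"
    and N: "\<not> nontrivial_2_cut V E tail head"
    and e0: "e0 \<in> E" "degree E tail head (tail e0) = 3" "degree E tail head (head e0) = 3"
  shows "two_edge_connected V (E - {e0}) tail head"
proof (rule two_edge_connectedI)
  have fin: "finite E" and ends: "\<forall>e\<in>E. tail e \<in> V \<and> head e \<in> V"
    using G by (auto simp: oriented_graph_def)
  show "oriented_graph V (E - {e0}) tail head" using G by (auto simp: oriented_graph_def)
  fix X assume X: "X \<subseteq> V" "X \<noteq> {}" "X \<noteq> V"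
  have big: "2 \<le> card (cut_edges E tail head X)" by (rule two_edge_connectedD[OF G T X])
  show "2 \<le> card (cut_edges (E - {e0}) tail head X)"
  proof (rule ccontr)
    assume small: "\<not> ?thesis"
    have e0X: "e0 \<in> cut_edges E tail head X"
    proof (rule ccontr)
      assume "e0 \<notin> cut_edges E tail head X"
      then have "cut_edges (E - {e0}) tail head X = cut_edges E tail head X"
        by (auto simp: cut_edges_Diff)
      then show False using small big by simp
    qed
    have cut2: "card (cut_edges E tail head X) \<le> 2"
      using small card_Diff_singleton[OF e0X] by (simp add: cut_edges_Diff)
    have cut2': "card (cut_edges E tail head (V - X)) \<le> 2"
      using cut2 by (simp add: cut_edges_complement[OF ends])
    obtain c d where cd: "c \<in> X" "d \<in> V - X" "degree E tail head c = 3" "degree E tail head d = 3"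
    proof (cases "tail e0 \<in> X")
      case True
      then show thesis using that[of "tail e0" "head e0"] e0 e0X ends by (auto simp: cut_edges_def)
    next
      case False
      then show thesis using that[of "head e0" "tail e0"] e0 e0X ends by (auto simp: cut_edges_def)
    qed
    have "\<exists>h\<in>E. tail h \<in> X \<and> head h \<in> X" "\<exists>h\<in>E. tail h \<in> V - X \<and> head h \<in> V - X"
      using inner_edge_at_degree_3[OF fin cd(1,3) cut2] inner_edge_at_degree_3[OF fin cd(2,4) cut2'] .
    then show False using N X(1) cut2 unfolding nontrivial_2_cut_def by blast
  qed
qed

lemma two_edge_connected_delete_vertex:
  assumes G: "oriented_graph V E tail head" and T: "two_edge_connected V E tail head"
    and N: "\<not> nontrivial_2_cut V E tail head"
    and s: "s \<in> V" "delta E tail head s = {f, g}" "f \<noteq> g"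
    and pf: "joins tail head f s p" and qg: "joins tail head g s q"
    and dp: "degree E tail head p = 3" and dq: "degree E tail head q = 3"
  shows "two_edge_connected (V - {s}) (E - {f, g}) tail head"
proof (rule two_edge_connectedI)
  have fin: "finite E" and ends: "\<forall>e\<in>E. tail e \<in> V \<and> head e \<in> V"
    using G by (auto simp: oriented_graph_def)
  have fg: "f \<in> E" "g \<in> E" using s by (auto simp: delta_def)
  have at_s: "e = f \<or> e = g" if "e \<in> E" "tail e = s \<or> head e = s" for e
    using s that by (auto simp: delta_def)
  show "oriented_graph (V - {s}) (E - {f, g}) tail head"
    using G at_s unfolding oriented_graph_def by blast
  fix X assume X: "X \<subseteq> V - {s}" "X \<noteq> {}" "X \<noteq> V - {s}"
  have sX: "s \<notin> X" using X(1) by blast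
  have cut_off_s: "e \<in> cut_edges E tail head X \<longleftrightarrow> e \<in> cut_edges (E - {f, g}) tail head X"
    if "e \<noteq> f" "e \<noteq> g" for e
    using that by (simp add: cut_edges_Diff)
  have one_side: "2 \<le> card (cut_edges (E - {f, g}) tail head X)"
    if ab: "a \<in> X" "b \<notin> X" and f'g': "joins tail head f' s a" "joins tail head g' s b" "{f', g'} = {f, g}"
      and da: "degree E tail head a = 3" for a b f' g'
  proof (rule ccontr)
    assume small: "\<not> ?thesis"
    have "f' \<in> E" "g' \<in> E" using f'g'(3) fg by auto
    then have inner: "\<exists>h\<in>E. tail h \<in> V - X \<and> head h \<in> V - X"
      using f'g'(2) ab(2) sX s(1) ends by auto
    have "cut_edges E tail head X \<subseteq> insert f' (cut_edges (E - {f, g}) tail head X)"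
    proof
      fix e assume e: "e \<in> cut_edges E tail head X"
      have "e \<noteq> g'" using e f'g'(2) ab(2) sX by (auto simp: cut_edges_def)
      then show "e \<in> insert f' (cut_edges (E - {f, g}) tail head X)"
        using e cut_off_s f'g'(3) by blast
    qed
    then have "card (cut_edges E tail head X) \<le> card (insert f' (cut_edges (E - {f, g}) tail head X))"
      by (intro card_mono) (simp_all add: fin finite_cut_edges)
    also have "\<dots> \<le> 2"
      using small fin by (simp add: card_insert_if finite_cut_edges)
    finally have cut2: "card (cut_edges E tail head X) \<le> 2" .
    then have "\<exists>h\<in>E. tail h \<in> X \<and> head h \<in> X" by (rule inner_edge_at_degree_3[OF fin ab(1) da])
    then show False using N X(1) cut2 inner unfolding nontrivial_2_cut_def by blast
  qed
  show "2 \<le> card (cut_edges (E - {f, g}) tail head X)"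
  proof (cases "p \<in> X"; cases "q \<in> X")
    assume "p \<in> X" "q \<in> X"
    then have "cut_edges E tail head (insert s X) = cut_edges (E - {f, g}) tail head X"
      using pf qg at_s sX unfolding cut_edges_def by auto
    moreover have "2 \<le> card (cut_edges E tail head (insert s X))"
      by (rule two_edge_connectedD[OF G T]) (use X s(1) in auto)
    ultimately show ?thesis by simp
  next
    assume "p \<notin> X" "q \<notin> X"
    then have "cut_edges E tail head X = cut_edges (E - {f, g}) tail head X"
      using pf qg sX unfolding cut_edges_def by auto
    moreover have "2 \<le> card (cut_edges E tail head X)"
      by (rule two_edge_connectedD[OF G T]) (use X in auto)
    ultimately show ?thesis by simp
  next
    assume "p \<in> X" "q \<notin> X"
    then show ?thesis using one_side[of p q f g] pf qg dp by simp
  next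
    assume "p \<notin> X" "q \<in> X"
    then show ?thesis using one_side[of q p g f] pf qg dq by (simp add: insert_commute)
  qed
qed

section \<open>The extension problem\<close>

text \<open>Hypotheses and conclusion of the theorem as predicates, so that the induction may change the
  graph, the root, the weights and the prescriptions.\<close>

definition extension_problem ::
    "'v set \<Rightarrow> 'e set \<Rightarrow> ('e \<Rightarrow> 'v) \<Rightarrow> ('e \<Rightarrow> 'v) \<Rightarrow> 'v \<Rightarrow> ('v \<Rightarrow> 3) \<Rightarrow> ('e \<Rightarrow> 2) \<Rightarrow> ('e \<Rightarrow> 3) \<Rightarrow> bool" where
  "extension_problem V E tail head u \<mu> \<psi>\<^sub>2 \<psi>\<^sub>3 \<longleftrightarrow>
    oriented_graph V E tail head \<and> two_edge_connected V E tail head \<and> subcubic V E tail head \<and>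
    u \<in> V \<and> degree E tail head u = 2 \<and> sum \<mu> V = 0 \<and> (\<forall>v\<in>V. \<mu> v \<noteq> 0 \<longrightarrow> degree E tail head v = 2) \<and>
    bnd E tail head \<psi>\<^sub>3 u = \<mu> u \<and> (\<mu> u = 0 \<longrightarrow> bnd E tail head \<psi>\<^sub>2 u = 0) \<and>
    (\<forall>e\<in>delta E tail head u. \<psi>\<^sub>2 e \<noteq> 0 \<or> \<psi>\<^sub>3 e \<noteq> 0)"

definition is_extension ::
    "'v set \<Rightarrow> 'e set \<Rightarrow> ('e \<Rightarrow> 'v) \<Rightarrow> ('e \<Rightarrow> 'v) \<Rightarrow> 'v \<Rightarrow> ('v \<Rightarrow> 3) \<Rightarrow> ('e \<Rightarrow> 2) \<Rightarrow> ('e \<Rightarrow> 3) \<Rightarrow>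
      ('e \<Rightarrow> 2) \<Rightarrow> ('e \<Rightarrow> 3) \<Rightarrow> bool" where
  "is_extension V E tail head u \<mu> \<psi>\<^sub>2 \<psi>\<^sub>3 \<phi>\<^sub>2 \<phi>\<^sub>3 \<longleftrightarrow>
    (\<forall>e\<in>delta E tail head u. \<phi>\<^sub>2 e = \<psi>\<^sub>2 e \<and> \<phi>\<^sub>3 e = \<psi>\<^sub>3 e) \<and>
    (\<forall>v\<in>V. bnd E tail head \<phi>\<^sub>3 v = \<mu> v) \<and> (\<forall>v\<in>V. \<mu> v = 0 \<longrightarrow> bnd E tail head \<phi>\<^sub>2 v = 0) \<and>
    (\<forall>e\<in>E. \<phi>\<^sub>2 e \<noteq> 0 \<or> \<phi>\<^sub>3 e \<noteq> 0)"

abbreviation extendable ::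
    "'v set \<Rightarrow> 'e set \<Rightarrow> ('e \<Rightarrow> 'v) \<Rightarrow> ('e \<Rightarrow> 'v) \<Rightarrow> 'v \<Rightarrow> ('v \<Rightarrow> 3) \<Rightarrow> ('e \<Rightarrow> 2) \<Rightarrow> ('e \<Rightarrow> 3) \<Rightarrow> bool" where
  "extendable V E tail head u \<mu> \<psi>\<^sub>2 \<psi>\<^sub>3 \<equiv> \<exists>\<phi>\<^sub>2 \<phi>\<^sub>3. is_extension V E tail head u \<mu> \<psi>\<^sub>2 \<psi>\<^sub>3 \<phi>\<^sub>2 \<phi>\<^sub>3"

lemma extendable_two_vertices:
  assumes P: "extension_problem V E tail head u \<mu> \<psi>\<^sub>2 \<psi>\<^sub>3" and Eu: "E \<subseteq> delta E tail head u"
  shows "is_extension V E tail head u \<mu> \<psi>\<^sub>2 \<psi>\<^sub>3 \<psi>\<^sub>2 \<psi>\<^sub>3"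
proof -
  have G: "oriented_graph V E tail head" and T: "two_edge_connected V E tail head"
    and S: "subcubic V E tail head" and u: "u \<in> V" "degree E tail head u = 2"
    and iii: "bnd E tail head \<psi>\<^sub>3 u = \<mu> u" and iv: "\<mu> u = 0 \<longrightarrow> bnd E tail head \<psi>\<^sub>2 u = 0"
    and v: "\<forall>e\<in>delta E tail head u. \<psi>\<^sub>2 e \<noteq> 0 \<or> \<psi>\<^sub>3 e \<noteq> 0" and sum0: "sum \<mu> V = 0"
    using P by (auto simp: extension_problem_def)
  have fin: "finite V" "finite E" and ends: "\<forall>e\<in>E. tail e \<in> V \<and> head e \<in> V"
    and nl: "\<forall>e\<in>E. tail e \<noteq> head e"
    using G by (auto simp: oriented_graph_def)
  obtain e1 e2 where e12: "delta E tail head u = {e1, e2}" "e1 \<noteq> e2"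
    using u(2) by (auto simp: degree_def card_2_iff)
  have E12: "E = {e1, e2}" using Eu e12 by (auto simp: delta_def)
  define x where "x = other_end tail head u e1"
  have e1: "joins tail head e1 u x"
    using joins_other_end[of tail e1 head u] nl e12 by (auto simp: x_def delta_def)
  then have x: "x \<in> V" "x \<noteq> u" using ends nl E12 by auto
  have e2: "joins tail head e2 u x"
  proof -
    have "delta E tail head x \<subseteq> {e1, e2}" using E12 by (auto simp: delta_def)
    moreover have "card {e1, e2} \<le> card (delta E tail head x)"
      using two_le_degree[OF G T x(1) u(1) x(2)[symmetric]] e12(2) by (simp add: degree_def)
    ultimately have "delta E tail head x = {e1, e2}" by (intro card_seteq) auto
    then show ?thesis using e12 x(2) by (auto simp: delta_def)
  qed
  have V: "V = {u, x}" using parallel_edges_span[OF G T S e12 e1 e2] u(1) x(1) by blast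
  have "bnd E tail head \<phi> x = bnd E tail head \<phi> u" for \<phi> :: "_ \<Rightarrow> 2"
    using sum_bnd[OF fin ends, of \<phi>] x(2) by (auto simp: V add_eq_0_iff_eq_2)
  moreover have "bnd E tail head \<phi> x = - bnd E tail head \<phi> u" for \<phi> :: "_ \<Rightarrow> 3"
    using sum_bnd[OF fin ends, of \<phi>] x(2) by (simp add: V eq_neg_iff_add_eq_0 add.commute)
  moreover have "\<mu> x = - \<mu> u" using sum0 x(2) by (simp add: V eq_neg_iff_add_eq_0 add.commute)
  ultimately show ?thesis
    unfolding is_extension_def using iii iv v V E12 e12 by auto
qed

section \<open>Reductions\<close>

text \<open>The reduced weights (-1 at the tail of e0, 1 at its head) anticipate the value 1 in Z_3
  that e0 receives when it is put back.\<close>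

lemma extension_problem_delete_edge:
  fixes V :: "'v set" and E :: "'e set"
  assumes P: "extension_problem V E tail head u \<mu> \<psi>\<^sub>2 \<psi>\<^sub>3" and N: "\<not> nontrivial_2_cut V E tail head"
    and e0: "e0 \<in> E" "tail e0 \<noteq> u" "head e0 \<noteq> u"
      "degree E tail head (tail e0) = 3" "degree E tail head (head e0) = 3"
    and \<mu>0: "\<forall>v\<in>V. \<mu> v = 0"
  shows "extension_problem V (E - {e0}) tail head u (\<lambda>w. - incidence tail head w e0) \<psi>\<^sub>2 \<psi>\<^sub>3"
proof -
  have G: "oriented_graph V E tail head" and T: "two_edge_connected V E tail head"
    and S: "subcubic V E tail head" and u: "u \<in> V" "degree E tail head u = 2"
    and iii: "bnd E tail head \<psi>\<^sub>3 u = \<mu> u" and iv: "\<mu> u = 0 \<longrightarrow> bnd E tail head \<psi>\<^sub>2 u = 0"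
    and v: "\<forall>e\<in>delta E tail head u. \<psi>\<^sub>2 e \<noteq> 0 \<or> \<psi>\<^sub>3 e \<noteq> 0"
    using P by (auto simp: extension_problem_def)
  have fin: "finite V" "finite E" and ends: "\<forall>e\<in>E. tail e \<in> V \<and> head e \<in> V"
    using G by (auto simp: oriented_graph_def)
  have delta_u: "delta (E - {e0}) tail head u = delta E tail head u"
    using e0 by (auto simp: delta_def)
  have bnd_u: "bnd (E - {e0}) tail head \<phi>\<^sub>2 u = bnd E tail head \<phi>\<^sub>2 u"
    "bnd (E - {e0}) tail head \<phi>\<^sub>3 u = bnd E tail head \<phi>\<^sub>3 u"
    for \<phi>\<^sub>2 :: "'e \<Rightarrow> 2" and \<phi>\<^sub>3 :: "'e \<Rightarrow> 3"
    using fin e0 by (auto intro: bnd_Diff_nonincident)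
  have degree_Diff: "degree (E - {e0}) tail head w = degree E tail head w - 1"
    if "tail e0 = w \<or> head e0 = w" for w
    using that e0(1) unfolding degree_def delta_Diff by (subst card_Diff_singleton) (auto simp: delta_def)
  show ?thesis
    unfolding extension_problem_def
  proof (intro conjI ballI impI)
    show "oriented_graph V (E - {e0}) tail head" using G by (auto simp: oriented_graph_def)
    show "two_edge_connected V (E - {e0}) tail head"
      by (rule two_edge_connected_delete_edge[OF G T N e0(1,4,5)])
    show "subcubic V (E - {e0}) tail head"
      using S fin(2) unfolding subcubic_def degree_def delta_Diff
      by (meson card_mono Diff_subset finite_delta order_trans)
    show "degree (E - {e0}) tail head u = 2" using u(2) by (simp add: degree_def delta_u)
    show "(\<Sum>w\<in>V. - incidence tail head w e0) = (0::3)"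
      using sum_incidence[OF fin(1), of tail e0 head] ends e0(1) by (simp add: sum_negf)
    show "degree (E - {e0}) tail head w = 2" if "w \<in> V" "- incidence tail head w e0 \<noteq> (0::3)" for w
      using that degree_Diff[of w] e0(4,5) by (auto simp: incidence_def split: if_splits)
    show "bnd (E - {e0}) tail head \<psi>\<^sub>3 u = - incidence tail head u e0"
      using iii \<mu>0 u(1) e0 by (simp add: bnd_u incidence_nonincident)
    show "bnd (E - {e0}) tail head \<psi>\<^sub>2 u = 0" using iv \<mu>0 u(1) by (simp add: bnd_u)
  qed (use u v delta_u in auto)
qed

lemma is_extension_insert_edge:
  fixes V :: "'v set" and E :: "'e set"
  assumes G: "oriented_graph V E tail head" and e0: "e0 \<in> E" "tail e0 \<noteq> u" "head e0 \<noteq> u"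
    and \<mu>0: "\<forall>v\<in>V. \<mu> v = 0"
    and ext: "is_extension V (E - {e0}) tail head u (\<lambda>w. - incidence tail head w e0) \<psi>\<^sub>2 \<psi>\<^sub>3 \<phi>\<^sub>2 \<phi>\<^sub>3"
  shows "is_extension V E tail head u \<mu> \<psi>\<^sub>2 \<psi>\<^sub>3
    (\<phi>\<^sub>2(e0 := bnd (E - {e0}) tail head \<phi>\<^sub>2 (tail e0))) (\<phi>\<^sub>3(e0 := 1))"
proof -
  have fin: "finite V" "finite E" and ends: "\<forall>e\<in>E. tail e \<in> V \<and> head e \<in> V"
    and nl: "tail e0 \<noteq> head e0"
    using G e0 by (auto simp: oriented_graph_def)
  define E' where "E' = E - {e0}"
  define t where "t = tail e0"
  define h where "h = head e0"
  define x where "x = bnd E' tail head \<phi>\<^sub>2 t"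
  have E: "E = insert e0 E'" "e0 \<notin> E'" "finite E'" using e0 fin by (auto simp: E'_def)
  have s2: "\<forall>w\<in>V. - incidence tail head w e0 = (0::3) \<longrightarrow> bnd E' tail head \<phi>\<^sub>2 w = 0"
    and s3: "\<forall>w\<in>V. bnd E' tail head \<phi>\<^sub>3 w = - incidence tail head w e0"
    and s1: "\<forall>e\<in>delta E' tail head u. \<phi>\<^sub>2 e = \<psi>\<^sub>2 e \<and> \<phi>\<^sub>3 e = \<psi>\<^sub>3 e"
    and s4: "\<forall>e\<in>E'. \<phi>\<^sub>2 e \<noteq> 0 \<or> \<phi>\<^sub>3 e \<noteq> 0"
    using ext by (auto simp: is_extension_def E'_def)
  have bnd2: "bnd E tail head (\<phi>\<^sub>2(e0 := x)) w = bnd E' tail head \<phi>\<^sub>2 w + incidence tail head w e0 * x" for w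
    unfolding E(1) by (simp add: bnd_insert[OF E(3,2)] bnd_fun_upd_outside[OF E(2)])
  have bnd3: "bnd E tail head (\<phi>\<^sub>3(e0 := 1)) w = bnd E' tail head \<phi>\<^sub>3 w + incidence tail head w e0" for w
    unfolding E(1) by (simp add: bnd_insert[OF E(3,2)] bnd_fun_upd_outside[OF E(2)])
  have zero_off: "bnd E' tail head \<phi>\<^sub>2 w = 0" if "w \<in> V" "w \<noteq> t" "w \<noteq> h" for w
    using s2 that by (auto simp: incidence_nonincident t_def h_def)
  text \<open>The Z_2 boundary vanishes off t and h and sums to zero, so it is the same at t and h.\<close>
  have "bnd E' tail head \<phi>\<^sub>2 h = x"
  proof -
    have ends': "\<forall>e\<in>E'. tail e \<in> V \<and> head e \<in> V" using ends by (auto simp: E'_def)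
    have "(\<Sum>w\<in>V. bnd E' tail head \<phi>\<^sub>2 w) = (\<Sum>w\<in>{t, h}. bnd E' tail head \<phi>\<^sub>2 w)"
      using zero_off fin(1) ends e0(1) by (intro sum.mono_neutral_right) (auto simp: t_def h_def)
    then have "bnd E' tail head \<phi>\<^sub>2 t + bnd E' tail head \<phi>\<^sub>2 h = 0"
      using sum_bnd[OF fin(1) E(3) ends', of \<phi>\<^sub>2] nl by (simp add: t_def h_def)
    then show ?thesis by (simp add: x_def add_eq_0_iff_eq_2)
  qed
  then have "bnd E tail head (\<phi>\<^sub>2(e0 := x)) w = 0" if "w \<in> V" for w
    using that bnd2[of w] zero_off[of w] nl
    by (cases "w = t"; cases "w = h") (auto simp: incidence_def x_def t_def h_def)
  moreover have "bnd E tail head (\<phi>\<^sub>3(e0 := 1)) w = \<mu> w" if "w \<in> V" for w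
    using that s3 \<mu>0 by (simp add: bnd3)
  moreover have "e \<in> delta E tail head u \<Longrightarrow> e \<in> delta E' tail head u \<and> e \<noteq> e0" for e
    using e0 by (auto simp: delta_def E'_def)
  ultimately show ?thesis
    unfolding is_extension_def x_def t_def using s1 s4 by (auto simp: E'_def)
qed

lemma extension_problem_delete_vertex:
  fixes V :: "'v set" and E :: "'e set"
  assumes P: "extension_problem V E tail head u \<mu> \<psi>\<^sub>2 \<psi>\<^sub>3" and N: "\<not> nontrivial_2_cut V E tail head"
    and s: "s \<in> V" "delta E tail head s = {f, g}" "f \<noteq> g"
    and pf: "joins tail head f s p" and qg: "joins tail head g s q"
    and pq: "p \<noteq> q" and u: "u \<noteq> s" "u \<noteq> p" "u \<noteq> q"
    and dp: "degree E tail head p = 3" and dq: "degree E tail head q = 3"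
  shows "extension_problem (V - {s}) (E - {f, g}) tail head u (\<mu>(s := 0, p := - \<mu> s, q := - \<mu> s))
    \<psi>\<^sub>2 \<psi>\<^sub>3"
proof -
  have G: "oriented_graph V E tail head" and T: "two_edge_connected V E tail head"
    and S: "subcubic V E tail head" and uV: "u \<in> V" and du: "degree E tail head u = 2"
    and iii: "bnd E tail head \<psi>\<^sub>3 u = \<mu> u" and iv: "\<mu> u = 0 \<longrightarrow> bnd E tail head \<psi>\<^sub>2 u = 0"
    and v: "\<forall>e\<in>delta E tail head u. \<psi>\<^sub>2 e \<noteq> 0 \<or> \<psi>\<^sub>3 e \<noteq> 0"
    and sum0: "sum \<mu> V = 0" and ii: "\<forall>v\<in>V. \<mu> v \<noteq> 0 \<longrightarrow> degree E tail head v = 2"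
    using P by (auto simp: extension_problem_def)
  have fin: "finite V" "finite E" and ends: "\<forall>e\<in>E. tail e \<in> V \<and> head e \<in> V"
    and nl: "\<forall>e\<in>E. tail e \<noteq> head e"
    using G by (auto simp: oriented_graph_def)
  have fg: "f \<in> E" "g \<in> E" using s by (auto simp: delta_def)
  have pqV: "p \<in> V" "q \<in> V" "p \<noteq> s" "q \<noteq> s" using ends nl fg pf qg by auto
  have at_s: "e = f \<or> e = g" if "e \<in> E" "tail e = s \<or> head e = s" for e
    using s that by (auto simp: delta_def)
  define \<mu>' where "\<mu>' = \<mu>(s := 0, p := - \<mu> s, q := - \<mu> s)"
  have \<mu>pq: "\<mu> p = 0" "\<mu> q = 0" using ii pqV dp dq by auto
  have delta_w: "delta (E - {f, g}) tail head w = delta E tail head w" if "w \<notin> {s, p, q}" for w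
    using that pf qg by (auto simp: delta_def)
  have bnd_u: "bnd (E - {f, g}) tail head \<phi>\<^sub>2 u = bnd E tail head \<phi>\<^sub>2 u"
    "bnd (E - {f, g}) tail head \<phi>\<^sub>3 u = bnd E tail head \<phi>\<^sub>3 u"
    for \<phi>\<^sub>2 :: "'e \<Rightarrow> 2" and \<phi>\<^sub>3 :: "'e \<Rightarrow> 3"
    using fin pf qg u by (auto intro: bnd_Diff_nonincident)
  have degree_pq: "degree (E - {f, g}) tail head w = 2" if "w = p \<or> w = q" for w
  proof -
    have "delta (E - {f, g}) tail head p = delta E tail head p - {f}"
      "delta (E - {f, g}) tail head q = delta E tail head q - {g}"
      using pf qg pq pqV by (auto simp: delta_def)
    moreover have "f \<in> delta E tail head p" "g \<in> delta E tail head q"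
      using pf qg fg by (auto simp: delta_def)
    ultimately have "degree (E - {f, g}) tail head p = 2" "degree (E - {f, g}) tail head q = 2"
      using dp dq by (simp_all add: degree_def card_Diff_singleton)
    then show ?thesis using that by blast
  qed
  show ?thesis
    unfolding extension_problem_def \<mu>'_def[symmetric]
  proof (intro conjI ballI impI)
    show "oriented_graph (V - {s}) (E - {f, g}) tail head"
      using G at_s unfolding oriented_graph_def by blast
    show "two_edge_connected (V - {s}) (E - {f, g}) tail head"
      by (rule two_edge_connected_delete_vertex[OF G T N s pf qg dp dq])
    show "subcubic (V - {s}) (E - {f, g}) tail head"
      using S fin(2) unfolding subcubic_def degree_def delta_Diff
      by (meson DiffD1 card_mono Diff_subset finite_delta order_trans)
    show "u \<in> V - {s}" using uV u by simp
    show "degree (E - {f, g}) tail head u = 2" using du delta_w[of u] u by (simp add: degree_def)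
    text \<open>The weight removed at s reappears twice, at p and at q; the total changes by
      -3 \<mu> s, which vanishes in Z_3.\<close>
    show "sum \<mu>' (V - {s}) = 0"
    proof -
      define R where "R = V - {s, p, q}"
      have V: "V = insert s (insert p (insert q R))" "V - {s} = insert p (insert q R)"
        using s(1) pqV by (auto simp: R_def)
      have R: "s \<notin> R" "p \<notin> R" "q \<notin> R" "finite R" using fin(1) by (auto simp: R_def)
      have "sum \<mu>' R = sum \<mu> R" by (rule sum.cong) (use R in \<open>auto simp: \<mu>'_def\<close>)
      moreover have "sum \<mu> R = - \<mu> s" using sum0 R pq pqV \<mu>pq by (simp add: V eq_neg_iff_add_eq_0 add.commute)
      ultimately have "sum \<mu>' (V - {s}) = 3 * - \<mu> s"
        using R pq pqV by (simp add: V \<mu>'_def algebra_simps)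
      moreover have "(3::3) = 0" by simp
      ultimately show ?thesis by simp
    qed
    show "degree (E - {f, g}) tail head w = 2" if "w \<in> V - {s}" "\<mu>' w \<noteq> 0" for w
      using that degree_pq[of w] ii delta_w[of w] by (auto simp: \<mu>'_def degree_def split: if_splits)
    show "bnd (E - {f, g}) tail head \<psi>\<^sub>3 u = \<mu>' u" using iii u by (simp add: bnd_u \<mu>'_def)
    show "bnd (E - {f, g}) tail head \<psi>\<^sub>2 u = 0" if "\<mu>' u = 0" using iv u that by (simp add: bnd_u \<mu>'_def)
    show "\<psi>\<^sub>2 e \<noteq> 0 \<or> \<psi>\<^sub>3 e \<noteq> 0" if "e \<in> delta (E - {f, g}) tail head u" for e
      using that v delta_w[of u] u by auto
  qed
qed

lemma is_extension_restore_vertex: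
  fixes V :: "'v set" and E :: "'e set"
  assumes G: "oriented_graph V E tail head"
    and s: "s \<in> V" "delta E tail head s = {f, g}" "f \<noteq> g"
    and pf: "joins tail head f s p" and qg: "joins tail head g s q"
    and pq: "p \<noteq> q" and u: "u \<noteq> s" "u \<noteq> p" "u \<noteq> q"
    and \<mu>: "\<mu> s \<noteq> 0" "\<mu> p = 0" "\<mu> q = 0"
    and ext: "is_extension (V - {s}) (E - {f, g}) tail head u (\<mu>(s := 0, p := - \<mu> s, q := - \<mu> s))
      \<psi>\<^sub>2 \<psi>\<^sub>3 \<phi>\<^sub>2 \<phi>\<^sub>3"
  shows "is_extension V E tail head u \<mu> \<psi>\<^sub>2 \<psi>\<^sub>3
    (\<phi>\<^sub>2(f := bnd (E - {f, g}) tail head \<phi>\<^sub>2 p, g := bnd (E - {f, g}) tail head \<phi>\<^sub>2 q))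
    (\<phi>\<^sub>3(f := - incidence tail head s f * \<mu> s, g := - incidence tail head s g * \<mu> s))"
proof -
  have fin: "finite E" and nl: "\<forall>e\<in>E. tail e \<noteq> head e" using G by (auto simp: oriented_graph_def)
  have fg: "f \<in> E" "g \<in> E" using s by (auto simp: delta_def)
  have ps: "p \<noteq> s" "q \<noteq> s" using nl fg pf qg by auto
  define E' where "E' = E - {f, g}"
  define \<mu>' where "\<mu>' = \<mu>(s := 0, p := - \<mu> s, q := - \<mu> s)"
  define \<phi>\<^sub>2' where "\<phi>\<^sub>2' = \<phi>\<^sub>2(f := bnd E' tail head \<phi>\<^sub>2 p, g := bnd E' tail head \<phi>\<^sub>2 q)"
  define \<phi>\<^sub>3' where "\<phi>\<^sub>3' = \<phi>\<^sub>3(f := - incidence tail head s f * \<mu> s, g := - incidence tail head s g * \<mu> s)"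
  have s1: "\<forall>e\<in>delta E' tail head u. \<phi>\<^sub>2 e = \<psi>\<^sub>2 e \<and> \<phi>\<^sub>3 e = \<psi>\<^sub>3 e"
    and s2: "\<forall>w\<in>V - {s}. bnd E' tail head \<phi>\<^sub>3 w = \<mu>' w"
    and s3: "\<forall>w\<in>V - {s}. \<mu>' w = 0 \<longrightarrow> bnd E' tail head \<phi>\<^sub>2 w = 0"
    and s4: "\<forall>e\<in>E'. \<phi>\<^sub>2 e \<noteq> 0 \<or> \<phi>\<^sub>3 e \<noteq> 0"
    using ext by (auto simp: is_extension_def E'_def \<mu>'_def)
  have E: "E = insert f (insert g E')" "f \<notin> insert g E'" "g \<notin> E'" "finite E'"
    using fg fin s(3) by (auto simp: E'_def)
  have split: "bnd E tail head \<phi> w =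
      bnd E' tail head \<phi> w + incidence tail head w g * \<phi> g + incidence tail head w f * \<phi> f" for \<phi> w
    using E by (simp add: bnd_insert)
  have at_s: "e = f \<or> e = g" if "e \<in> E" "tail e = s \<or> head e = s" for e
    using s that by (auto simp: delta_def)
  have bnd_s: "bnd E' tail head \<phi> s = 0" for \<phi>
    by (rule bnd_nonincident) (use at_s in \<open>auto simp: E'_def\<close>)
  have off_f: "incidence tail head w f = (0::2)" "incidence tail head w f = (0::3)"
    if "w \<noteq> s" "w \<noteq> p" for w
    using that pf by (auto simp: incidence_nonincident)
  have off_g: "incidence tail head w g = (0::2)" "incidence tail head w g = (0::3)"
    if "w \<noteq> s" "w \<noteq> q" for w
    using that qg by (auto simp: incidence_nonincident)
  have pf': "incidence tail head p f = - incidence tail head s f"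
    and qg': "incidence tail head q g = - incidence tail head s g"
    using pf qg ps by (auto intro: incidence_joins)
  have sq: "incidence tail head s f * incidence tail head s f = (1::3)"
    "incidence tail head s g * incidence tail head s g = (1::3)"
    using pf qg fg nl by (auto intro: incidence_square)
  have fgE': "f \<notin> E'" "g \<notin> E'" using E by auto
  have b3: "bnd E tail head \<phi>\<^sub>3' w = bnd E' tail head \<phi>\<^sub>3 w
      - incidence tail head w g * incidence tail head s g * \<mu> s
      - incidence tail head w f * incidence tail head s f * \<mu> s" for w
    unfolding split[of \<phi>\<^sub>3' w] using s(3) by (simp add: \<phi>\<^sub>3'_def bnd_fun_upd_outside fgE' algebra_simps)
  have b2: "bnd E tail head \<phi>\<^sub>2' w = bnd E' tail head \<phi>\<^sub>2 w
      + incidence tail head w g * bnd E' tail head \<phi>\<^sub>2 q + incidence tail head w f * bnd E' tail head \<phi>\<^sub>2 p" for w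
    unfolding split[of \<phi>\<^sub>2' w] using s(3) by (simp add: \<phi>\<^sub>2'_def bnd_fun_upd_outside fgE')
  have "bnd E tail head \<phi>\<^sub>3' w = \<mu> w" if "w \<in> V" for w
  proof -
    consider "w = s" | "w = p" | "w = q" | "w \<notin> {s, p, q}" by blast
    then show ?thesis
    proof cases
      case 1
      have three: "(3::3) = 0" by simp
      show ?thesis using 1 sq by (simp add: b3 bnd_s algebra_simps three)
    next
      case 2
      then show ?thesis
        using s2 that ps pq off_g[of p] \<mu> sq(1) by (simp add: b3 pf' \<mu>'_def algebra_simps)
    next
      case 3
      then show ?thesis
        using s2 that ps pq off_f[of q] \<mu> sq(2) by (simp add: b3 qg' \<mu>'_def algebra_simps)
    next
      case 4
      then show ?thesis using s2 that off_f[of w] off_g[of w] by (simp add: b3 \<mu>'_def)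
    qed
  qed
  moreover have "bnd E tail head \<phi>\<^sub>2' w = 0" if "w \<in> V" "\<mu> w = 0" for w
  proof -
    have "incidence tail head p f = (1::2)" "incidence tail head q g = (1::2)"
      using pf qg fg nl by (auto intro: incidence_2)
    moreover have "w \<noteq> s" using that \<mu>(1) by auto
    ultimately show ?thesis
      using that s3 off_f[of w] off_g[of w] \<mu> pq ps by (cases "w = p"; cases "w = q") (auto simp: b2 \<mu>'_def)
  qed
  moreover have "\<phi>\<^sub>3' f \<noteq> 0" "\<phi>\<^sub>3' g \<noteq> 0"
  proof -
    have "incidence tail head s f \<noteq> (0::3)" "incidence tail head s g \<noteq> (0::3)"
      using pf qg fg nl by (auto simp: incidence_def)
    then show "\<phi>\<^sub>3' f \<noteq> 0" "\<phi>\<^sub>3' g \<noteq> 0"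
      using \<mu>(1) s(3) by (simp_all add: \<phi>\<^sub>3'_def mult_nonzero_3)
  qed
  moreover have "e \<in> delta E' tail head u \<and> e \<noteq> f \<and> e \<noteq> g" if "e \<in> delta E tail head u" for e
    using that pf qg u by (auto simp: delta_def E'_def)
  ultimately show ?thesis
    unfolding is_extension_def \<phi>\<^sub>2'_def[symmetric] \<phi>\<^sub>3'_def[symmetric] E'_def[symmetric]
    using s1 s4 by (auto simp: \<phi>\<^sub>2'_def \<phi>\<^sub>3'_def E'_def)
qed

lemma contract_edge_inner:
  assumes "\<forall>e\<in>E. tail e \<noteq> head e" "delta E tail head v = {f, g}"
    and "joins tail head f v p" "joins tail head g v q" "p \<noteq> q" "e \<in> E"
  shows "tail e \<in> {p, v} \<and> head e \<in> {p, v} \<longleftrightarrow> e = f"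
proof
  assume ends: "tail e \<in> {p, v} \<and> head e \<in> {p, v}"
  then have "tail e = v \<or> head e = v" using assms(1,6) by auto
  then have "e = f \<or> e = g" using assms(2,6) by (auto simp: delta_def)
  moreover have "e \<noteq> g" using ends assms(1,4,5) \<open>e \<in> E\<close> by auto
  ultimately show "e = f" by simp
qed (use assms(3) in auto)

lemma quotient_edges_contract_edge:
  assumes "\<forall>e\<in>E. tail e \<noteq> head e" "delta E tail head v = {f, g}"
    and "joins tail head f v p" "joins tail head g v q" "p \<noteq> q"
  shows "quotient_edges E tail head (collapse {v} p) = E - {f}"
proof -
  have "e \<in> E \<Longrightarrow> (tail e \<in> {p, v} \<and> head e \<in> {p, v}) = (e = f)" for e
    using contract_edge_inner[OF assms] .
  then show ?thesis unfolding quotient_edges_collapse[OF assms(1)] by auto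
qed

lemma delta_contract_edge:
  assumes nl: "\<forall>e\<in>E. tail e \<noteq> head e" and v: "delta E tail head v = {f, g}"
    and f: "joins tail head f v p" and g: "joins tail head g v q" and pq: "p \<noteq> q"
  shows "delta (quotient_edges E tail head (collapse {v} p)) (collapse {v} p \<circ> tail) (collapse {v} p \<circ> head) p =
    insert g (delta E tail head p - {f})"
proof -
  have inner: "e \<in> E \<Longrightarrow> (tail e \<in> {p, v} \<and> head e \<in> {p, v}) = (e = f)" for e
    using contract_edge_inner[OF assms] .
  have at_v: "e \<in> E \<Longrightarrow> tail e = v \<or> head e = v \<Longrightarrow> e = f \<or> e = g" for e
    using v by (auto simp: delta_def)
  have fg: "g \<in> E" "f \<in> E" using v by (auto simp: delta_def)
  have "cut_edges E tail head {p, v} = insert g (delta E tail head p - {f})"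
  proof (intro equalityI subsetI)
    fix e assume e: "e \<in> cut_edges E tail head {p, v}"
    then have "e \<in> E" "e \<noteq> f" using inner[of e] by (auto simp: cut_edges_def)
    then show "e \<in> insert g (delta E tail head p - {f})"
      using e at_v[of e] by (auto simp: cut_edges_def delta_def)
  next
    fix e assume e: "e \<in> insert g (delta E tail head p - {f})"
    show "e \<in> cut_edges E tail head {p, v}"
    proof (cases "e = g")
      case True
      then show ?thesis using g pq fg nl by (auto simp: cut_edges_def)
    next
      case False
      then have "e \<in> E" "e \<noteq> f" "tail e = p \<or> head e = p" using e by (auto simp: delta_def)
      then show ?thesis using inner[of e] nl by (auto simp: cut_edges_def)
    qed
  qed
  then show ?thesis by (simp add: delta_collapse_target)
qed

lemma extension_problem_contract_edge:
  fixes V :: "'v set" and E :: "'e set"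
  assumes P: "extension_problem V E tail head u \<mu> \<psi>\<^sub>2 \<psi>\<^sub>3"
    and v: "v \<in> V" "v \<noteq> u" "delta E tail head v = {f, g}"
    and pf: "joins tail head f v p" and qg: "joins tail head g v q" and pq: "p \<noteq> q" and pu: "p \<noteq> u"
    and cond: "\<mu> v = 0 \<or> (degree E tail head p = 2 \<and> \<mu> p \<noteq> 0)"
  shows "extension_problem (V - {v}) (quotient_edges E tail head (collapse {v} p))
    (collapse {v} p \<circ> tail) (collapse {v} p \<circ> head) u (collapse_weight {v} p \<mu>) \<psi>\<^sub>2 \<psi>\<^sub>3"
proof -
  have G: "oriented_graph V E tail head" and T: "two_edge_connected V E tail head"
    and S: "subcubic V E tail head" and uV: "u \<in> V" and du: "degree E tail head u = 2"
    and iii: "bnd E tail head \<psi>\<^sub>3 u = \<mu> u" and iv: "\<mu> u = 0 \<longrightarrow> bnd E tail head \<psi>\<^sub>2 u = 0"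
    and \<psi>u: "\<forall>e\<in>delta E tail head u. \<psi>\<^sub>2 e \<noteq> 0 \<or> \<psi>\<^sub>3 e \<noteq> 0"
    and sum0: "sum \<mu> V = 0" and ii: "\<forall>v\<in>V. \<mu> v \<noteq> 0 \<longrightarrow> degree E tail head v = 2"
    using P by (auto simp: extension_problem_def)
  have fin: "finite V" "finite E" and ends: "\<forall>e\<in>E. tail e \<in> V \<and> head e \<in> V"
    and nl: "\<forall>e\<in>E. tail e \<noteq> head e"
    using G by (auto simp: oriented_graph_def)
  have fg: "f \<in> E" "g \<in> E" using v by (auto simp: delta_def)
  have p: "p \<in> V" "p \<noteq> v" using fg pf ends nl by auto
  define r where "r = collapse {v} p"
  define E' where "E' = quotient_edges E tail head r"
  have V': "r ` V = V - {v}" using v(1) p by (auto simp: r_def collapse_image)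
  have E': "E' = E - {f}" unfolding E'_def r_def by (rule quotient_edges_contract_edge[OF nl v(3) pf qg pq])
  have delta_off: "delta E' (r \<circ> tail) (r \<circ> head) w = delta E tail head w" if "w \<noteq> v" "w \<noteq> p" for w
    unfolding E'_def r_def using that nl by (intro delta_collapse_outside) auto
  have degree_p: "degree E' (r \<circ> tail) (r \<circ> head) p = degree E tail head p"
  proof -
    have gf: "g \<notin> delta E tail head p" "f \<in> delta E tail head p"
      using pf qg pq p(2) fg nl by (auto simp: delta_def)
    have "card (insert g (delta E tail head p - {f})) = Suc (card (delta E tail head p - {f}))"
      by (rule card_insert_disjoint) (use gf finite_delta[OF fin(2)] in auto)
    also have "\<dots> = card (delta E tail head p)"
      using card_Suc_Diff1[OF finite_delta[OF fin(2)] gf(2)] .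
    finally show ?thesis
      unfolding degree_def E'_def r_def delta_contract_edge[OF nl v(3) pf qg pq] .
  qed
  have bnd_u: "bnd E' (r \<circ> tail) (r \<circ> head) \<phi> u = bnd E tail head \<phi> u" for \<phi> :: "'e \<Rightarrow> 'a::comm_ring_1"
    using bnd_collapse[OF G _ p(1), of "{v}" u \<phi>] v uV pu by (simp add: E'_def r_def collapse_weight_def)
  show ?thesis
    unfolding extension_problem_def E'_def[symmetric] r_def[symmetric]
  proof (intro conjI ballI impI)
    show "oriented_graph (V - {v}) E' (r \<circ> tail) (r \<circ> head)"
      using oriented_graph_quotient[OF G, of r] by (simp add: V' E'_def)
    show "two_edge_connected (V - {v}) E' (r \<circ> tail) (r \<circ> head)"
      using two_edge_connected_quotient[OF G T, of r] by (simp add: V' E'_def)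
    show "subcubic (V - {v}) E' (r \<circ> tail) (r \<circ> head)"
      unfolding subcubic_def
    proof
      fix w assume "w \<in> V - {v}"
      then show "degree E' (r \<circ> tail) (r \<circ> head) w \<le> 3"
        using S degree_p delta_off[of w] p(1) by (cases "w = p") (auto simp: subcubic_def degree_def)
    qed
    show "u \<in> V - {v}" using uV v(2) by simp
    show "degree E' (r \<circ> tail) (r \<circ> head) u = 2" using du delta_off[of u] v(2) pu by (simp add: degree_def)
    show "sum (collapse_weight {v} p \<mu>) (V - {v}) = 0"
      using sum_collapse_weight[OF fin(1), of "{v}" p \<mu>] v(1) p sum0 by (simp add: insert_absorb)
    show "degree E' (r \<circ> tail) (r \<circ> head) w = 2" if "w \<in> V - {v}" "collapse_weight {v} p \<mu> w \<noteq> 0" for w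
      using that cond ii degree_p delta_off[of w] p
      by (cases "w = p") (auto simp: collapse_weight_def degree_def)
    show "bnd E' (r \<circ> tail) (r \<circ> head) \<psi>\<^sub>3 u = collapse_weight {v} p \<mu> u"
      using iii pu by (simp add: bnd_u collapse_weight_def)
    show "bnd E' (r \<circ> tail) (r \<circ> head) \<psi>\<^sub>2 u = 0" if "collapse_weight {v} p \<mu> u = 0"
      using iv pu that by (simp add: bnd_u collapse_weight_def)
    show "\<psi>\<^sub>2 e \<noteq> 0 \<or> \<psi>\<^sub>3 e \<noteq> 0" if "e \<in> delta E' (r \<circ> tail) (r \<circ> head) u" for e
      using that \<psi>u delta_off[of u] v(2) pu by auto
  qed
qed

lemma is_extension_expand_edge:
  fixes V :: "'v set" and E :: "'e set"
  assumes G: "oriented_graph V E tail head"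
    and v: "v \<in> V" "v \<noteq> u" "delta E tail head v = {f, g}"
    and pf: "joins tail head f v p" and qg: "joins tail head g v q" and pq: "p \<noteq> q" and pu: "p \<noteq> u"
    and cond: "\<mu> v = 0 \<or> (degree E tail head p = 2 \<and> \<mu> p \<noteq> 0)"
    and ext: "is_extension (V - {v}) (quotient_edges E tail head (collapse {v} p))
      (collapse {v} p \<circ> tail) (collapse {v} p \<circ> head) u (collapse_weight {v} p \<mu>) \<psi>\<^sub>2 \<psi>\<^sub>3 \<phi>\<^sub>2 \<phi>\<^sub>3"
  shows "is_extension V E tail head u \<mu> \<psi>\<^sub>2 \<psi>\<^sub>3
    (\<phi>\<^sub>2(f := if \<mu> v = 0 then \<phi>\<^sub>2 g else 1))
    (\<phi>\<^sub>3(f := incidence tail head v f * (\<mu> v - incidence tail head v g * \<phi>\<^sub>3 g)))"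
proof -
  have fin: "finite E" and ends: "\<forall>e\<in>E. tail e \<in> V \<and> head e \<in> V"
    and nl: "\<forall>e\<in>E. tail e \<noteq> head e"
    using G by (auto simp: oriented_graph_def)
  have fg: "f \<in> E" "g \<in> E" using v by (auto simp: delta_def)
  have p: "p \<in> V" "p \<noteq> v" using fg pf ends nl by auto
  have "f \<noteq> g" using pf qg pq fg nl by auto
  define r where "r = collapse {v} p"
  define E' where "E' = quotient_edges E tail head r"
  define \<mu>' where "\<mu>' = collapse_weight {v} p \<mu>"
  define \<phi>\<^sub>2' where "\<phi>\<^sub>2' = \<phi>\<^sub>2(f := if \<mu> v = 0 then \<phi>\<^sub>2 g else 1)"
  define \<phi>\<^sub>3' where "\<phi>\<^sub>3' = \<phi>\<^sub>3(f := incidence tail head v f * (\<mu> v - incidence tail head v g * \<phi>\<^sub>3 g))"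
  have E': "E' = E - {f}" unfolding E'_def r_def by (rule quotient_edges_contract_edge[OF nl v(3) pf qg pq])
  have s1: "\<forall>e\<in>delta E' (r \<circ> tail) (r \<circ> head) u. \<phi>\<^sub>2 e = \<psi>\<^sub>2 e \<and> \<phi>\<^sub>3 e = \<psi>\<^sub>3 e"
    and s2: "\<forall>w\<in>V - {v}. bnd E' (r \<circ> tail) (r \<circ> head) \<phi>\<^sub>3 w = \<mu>' w"
    and s3: "\<forall>w\<in>V - {v}. \<mu>' w = 0 \<longrightarrow> bnd E' (r \<circ> tail) (r \<circ> head) \<phi>\<^sub>2 w = 0"
    and s4: "\<forall>e\<in>E'. \<phi>\<^sub>2 e \<noteq> 0 \<or> \<phi>\<^sub>3 e \<noteq> 0"
    using ext by (auto simp: is_extension_def E'_def r_def \<mu>'_def)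
  have bnd_v: "bnd E tail head \<psi> v = incidence tail head v f * \<psi> f + incidence tail head v g * \<psi> g" for \<psi>
    by (rule bnd_degree_2[OF fin v(3) \<open>f \<noteq> g\<close>])
  have sq: "incidence tail head v f * incidence tail head v f = (1::3)"
    using pf fg nl by (intro incidence_square) auto
  have inc2: "incidence tail head v f = (1::2)" "incidence tail head v g = (1::2)"
    using pf qg fg nl by (auto intro: incidence_2)
  have "bnd E tail head \<phi>\<^sub>3' v = incidence tail head v f * incidence tail head v f *
      (\<mu> v - incidence tail head v g * \<phi>\<^sub>3 g) + incidence tail head v g * \<phi>\<^sub>3 g"
    using \<open>f \<noteq> g\<close> by (simp add: bnd_v \<phi>\<^sub>3'_def mult.assoc)
  then have v3: "bnd E tail head \<phi>\<^sub>3' v = \<mu> v" using sq by simp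
  have v2: "\<mu> v = 0 \<Longrightarrow> bnd E tail head \<phi>\<^sub>2' v = 0"
    using inc2 \<open>f \<noteq> g\<close> by (simp add: bnd_v \<phi>\<^sub>2'_def)
  have \<mu>'_p: "\<mu>' p = \<mu> p + \<mu> v" and \<mu>'_off: "w \<noteq> p \<Longrightarrow> \<mu>' w = \<mu> w" for w
    using p(2) by (simp_all add: \<mu>'_def collapse_weight_def)
  have f_pv: "tail f \<in> insert p {v}" "head f \<in> insert p {v}" using pf by auto
  have lift3: "bnd E' (r \<circ> tail) (r \<circ> head) \<phi>\<^sub>3 w =
      (if w = p then bnd E tail head \<phi>\<^sub>3' p + bnd E tail head \<phi>\<^sub>3' v else bnd E tail head \<phi>\<^sub>3' w)"
    and lift2: "bnd E' (r \<circ> tail) (r \<circ> head) \<phi>\<^sub>2 w =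
      (if w = p then bnd E tail head \<phi>\<^sub>2' p + bnd E tail head \<phi>\<^sub>2' v else bnd E tail head \<phi>\<^sub>2' w)"
    if "w \<in> V - {v}" for w
    using bnd_collapse_agree_off[OF G _ p(1) _ f_pv, of w \<phi>\<^sub>3' \<phi>\<^sub>3]
      bnd_collapse_agree_off[OF G _ p(1) _ f_pv, of w \<phi>\<^sub>2' \<phi>\<^sub>2] that v(1) p
    by (simp_all add: E'_def r_def \<phi>\<^sub>2'_def \<phi>\<^sub>3'_def collapse_weight_def insert_absorb)
  have bnd3: "bnd E tail head \<phi>\<^sub>3' w = \<mu> w" if w: "w \<in> V" for w
  proof -
    consider "w = v" | "w = p" | "w \<in> V - {v}" "w \<noteq> p" using w by blast
    then show ?thesis
    proof cases
      case 2
      then show ?thesis using s2 lift3[of p] p v3 \<mu>'_p by (simp add: add.commute)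
    next
      case 3
      then show ?thesis using s2 lift3[of w] \<mu>'_off by simp
    qed (use v3 in simp)
  qed
  have bnd2: "bnd E tail head \<phi>\<^sub>2' w = 0" if w: "w \<in> V" "\<mu> w = 0" for w
  proof -
    consider "w = v" | "w = p" | "w \<in> V - {v}" "w \<noteq> p" using w by blast
    then show ?thesis
    proof cases
      case 1
      then show ?thesis using v2 w by simp
    next
      case 2
      then have "\<mu> v = 0" using cond w by auto
      then show ?thesis using 2 w s3 lift2[of p] p v2 \<mu>'_p by simp
    next
      case 3
      then show ?thesis using w s3 lift2[of w] \<mu>'_off by simp
    qed
  qed
  have f_nz: "\<phi>\<^sub>2' f \<noteq> 0 \<or> \<phi>\<^sub>3' f \<noteq> 0"
  proof (cases "\<mu> v = 0")
    case True
    show ?thesis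
    proof (rule ccontr)
      assume "\<not> ?thesis"
      then have "\<phi>\<^sub>2 g = 0" "incidence tail head v f * (incidence tail head v g * \<phi>\<^sub>3 g) = 0"
        using \<open>f \<noteq> g\<close> by (simp_all add: \<phi>\<^sub>2'_def \<phi>\<^sub>3'_def True)
      moreover have "incidence tail head v f \<noteq> (0::3)" "incidence tail head v g \<noteq> (0::3)"
        using pf qg fg nl by (auto simp: incidence_def)
      ultimately have "\<phi>\<^sub>2 g = 0" "\<phi>\<^sub>3 g = 0" using mult_eq_0_3 by blast+
      then show False using s4 E' fg(2) \<open>f \<noteq> g\<close> by auto
    qed
  qed (simp add: \<phi>\<^sub>2'_def)
  have delta_u: "delta E' (r \<circ> tail) (r \<circ> head) u = delta E tail head u"
    unfolding E'_def r_def by (rule delta_collapse_outside) (use nl v(2) pu in auto)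
  have f_u: "f \<notin> delta E tail head u" using pf v(2) pu by (auto simp: delta_def)
  have same: "\<phi>\<^sub>2' e = \<phi>\<^sub>2 e" "\<phi>\<^sub>3' e = \<phi>\<^sub>3 e" if "e \<noteq> f" for e
    using that by (simp_all add: \<phi>\<^sub>2'_def \<phi>\<^sub>3'_def)
  show ?thesis
    unfolding is_extension_def \<phi>\<^sub>2'_def[symmetric] \<phi>\<^sub>3'_def[symmetric]
  proof (intro conjI ballI impI)
    fix e assume "e \<in> delta E tail head u"
    then show "\<phi>\<^sub>2' e = \<psi>\<^sub>2 e" "\<phi>\<^sub>3' e = \<psi>\<^sub>3 e"
      using s1 same[of e] delta_u f_u by auto
  next
    fix e assume "e \<in> E"
    then show "\<phi>\<^sub>2' e \<noteq> 0 \<or> \<phi>\<^sub>3' e \<noteq> 0" using f_nz s4 E' same[of e] by (cases "e = f") auto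
  qed (use bnd3 bnd2 in auto)
qed

text \<open>Prescriptions for the second edge e3 at x that make the boundary at x correct, so that the
  vertex obtained by merging u into x carries the combined weight of u and x.\<close>

lemma bnd_root_values:
  fixes E :: "'e set" and \<psi>\<^sub>2 :: "'e \<Rightarrow> 2" and \<psi>\<^sub>3 :: "'e \<Rightarrow> 3" and \<mu> :: "'v \<Rightarrow> 3" and u :: 'v
  assumes fin: "finite E" and x: "delta E tail head x = {e1, e3}" "e1 \<noteq> e3"
    and nl: "\<forall>e\<in>E. tail e \<noteq> head e"
  defines "c\<^sub>2 \<equiv> if \<mu> x = 0 then \<psi>\<^sub>2 e1 else if \<mu> u + \<mu> x = 0 then bnd E tail head \<psi>\<^sub>2 u + \<psi>\<^sub>2 e1 else 1"
    and "c\<^sub>3 \<equiv> incidence tail head x e3 * (\<mu> x - incidence tail head x e1 * \<psi>\<^sub>3 e1)"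
  shows "bnd E tail head (\<psi>\<^sub>3(e3 := c\<^sub>3)) x = \<mu> x"
    and "\<mu> x = 0 \<Longrightarrow> bnd E tail head (\<psi>\<^sub>2(e3 := c\<^sub>2)) x = 0"
    and "\<mu> x \<noteq> 0 \<Longrightarrow> \<mu> u + \<mu> x = 0 \<Longrightarrow> bnd E tail head (\<psi>\<^sub>2(e3 := c\<^sub>2)) x = bnd E tail head \<psi>\<^sub>2 u"
proof -
  have at_x: "e1 \<in> E" "e3 \<in> E" "tail e1 = x \<or> head e1 = x" "tail e3 = x \<or> head e3 = x"
    using x by (auto simp: delta_def)
  have sq: "incidence tail head x e3 * incidence tail head x e3 = (1::3)"
    using at_x nl by (intro incidence_square) auto
  have inc2: "incidence tail head x e1 = (1::2)" "incidence tail head x e3 = (1::2)"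
    using at_x nl by (auto intro: incidence_2)
  note bnd_x = bnd_degree_2[OF fin x]
  have "bnd E tail head (\<psi>\<^sub>3(e3 := c\<^sub>3)) x = incidence tail head x e1 * \<psi>\<^sub>3 e1 +
      incidence tail head x e3 * incidence tail head x e3 * (\<mu> x - incidence tail head x e1 * \<psi>\<^sub>3 e1)"
    using x(2) by (simp add: bnd_x c\<^sub>3_def mult.assoc)
  then show "bnd E tail head (\<psi>\<^sub>3(e3 := c\<^sub>3)) x = \<mu> x" using sq by simp
  have "bnd E tail head (\<psi>\<^sub>2(e3 := c\<^sub>2)) x = \<psi>\<^sub>2 e1 + c\<^sub>2"
    using x(2) by (simp add: bnd_x inc2)
  then show "\<mu> x = 0 \<Longrightarrow> bnd E tail head (\<psi>\<^sub>2(e3 := c\<^sub>2)) x = 0"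
    and "\<mu> x \<noteq> 0 \<Longrightarrow> \<mu> u + \<mu> x = 0 \<Longrightarrow> bnd E tail head (\<psi>\<^sub>2(e3 := c\<^sub>2)) x = bnd E tail head \<psi>\<^sub>2 u"
    by (simp_all add: c\<^sub>2_def add.assoc[symmetric] two_eq_zero_2)
qed

lemma root_values_nonzero:
  fixes E :: "'e set" and \<psi>\<^sub>2 :: "'e \<Rightarrow> 2" and \<psi>\<^sub>3 :: "'e \<Rightarrow> 3" and \<mu> :: "'v \<Rightarrow> 3" and u :: 'v
  assumes fin: "finite E" and nl: "\<forall>e\<in>E. tail e \<noteq> head e"
    and u: "delta E tail head u = {e1, e2}" "e1 \<noteq> e2" and e1: "joins tail head e1 u x"
    and x: "e3 \<in> E" "tail e3 = x \<or> head e3 = x"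
    and iii: "bnd E tail head \<psi>\<^sub>3 u = \<mu> u"
    and nz: "\<forall>e\<in>delta E tail head u. \<psi>\<^sub>2 e \<noteq> 0 \<or> \<psi>\<^sub>3 e \<noteq> 0"
  defines "c\<^sub>2 \<equiv> if \<mu> x = 0 then \<psi>\<^sub>2 e1 else if \<mu> u + \<mu> x = 0 then bnd E tail head \<psi>\<^sub>2 u + \<psi>\<^sub>2 e1 else 1"
    and "c\<^sub>3 \<equiv> incidence tail head x e3 * (\<mu> x - incidence tail head x e1 * \<psi>\<^sub>3 e1)"
  shows "c\<^sub>2 \<noteq> 0 \<or> c\<^sub>3 \<noteq> 0"
proof (rule ccontr)
  assume "\<not> ?thesis"
  then have c0: "c\<^sub>2 = 0" "\<mu> x = incidence tail head x e1 * \<psi>\<^sub>3 e1"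
    using x nl by (auto simp: c\<^sub>3_def incidence_def split: if_splits)
  have e12: "e1 \<in> E" "e2 \<in> E" "tail e2 = u \<or> head e2 = u" using u by (auto simp: delta_def)
  have x_e1: "incidence tail head x e1 = - incidence tail head u e1"
    using e1 e12 nl by (intro incidence_joins) auto
  note bnd_u = bnd_degree_2[OF fin u]
  have inc2: "incidence tail head u e1 = (1::2)" "incidence tail head u e2 = (1::2)"
    using e1 e12 nl by (auto intro: incidence_2)
  have inc3: "incidence tail head u e2 \<noteq> (0::3)" using e12 nl by (auto simp: incidence_def)
  show False
  proof (cases "\<mu> x = 0")
    case True
    then have "\<psi>\<^sub>2 e1 = 0" "\<psi>\<^sub>3 e1 = 0"
      using c0 e1 e12 nl mult_eq_0_3[of "incidence tail head x e1"] by (auto simp: c\<^sub>2_def incidence_def)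
    then show False using nz u by auto
  next
    case False
    then have sum0: "\<mu> u + \<mu> x = 0" using c0(1) by (auto simp: c\<^sub>2_def split: if_splits)
    then have "\<psi>\<^sub>2 e2 = 0" using c0(1) False by (simp add: c\<^sub>2_def bnd_u inc2 two_eq_zero_2)
    moreover have "incidence tail head u e2 * \<psi>\<^sub>3 e2 = \<mu> u + \<mu> x"
      using iii c0(2) by (simp add: bnd_u x_e1 algebra_simps)
    ultimately show False using sum0 nz u mult_eq_0_3[OF inc3] by auto
  qed
qed

lemma extension_problem_contract_root_edge:
  fixes V :: "'v set" and E :: "'e set" and \<psi>\<^sub>2 :: "'e \<Rightarrow> 2" and \<psi>\<^sub>3 :: "'e \<Rightarrow> 3"
  assumes P: "extension_problem V E tail head u \<mu> \<psi>\<^sub>2 \<psi>\<^sub>3"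
    and u: "delta E tail head u = {e1, e2}" "e1 \<noteq> e2"
    and e1: "joins tail head e1 u x" and e2: "joins tail head e2 u y" and xy: "x \<noteq> y"
    and x: "delta E tail head x = {e1, e3}" "e1 \<noteq> e3"
  defines "c\<^sub>2 \<equiv> if \<mu> x = 0 then \<psi>\<^sub>2 e1 else if \<mu> u + \<mu> x = 0 then bnd E tail head \<psi>\<^sub>2 u + \<psi>\<^sub>2 e1 else 1"
    and "c\<^sub>3 \<equiv> incidence tail head x e3 * (\<mu> x - incidence tail head x e1 * \<psi>\<^sub>3 e1)"
  shows "extension_problem (V - {u}) (quotient_edges E tail head (collapse {u} x))
    (collapse {u} x \<circ> tail) (collapse {u} x \<circ> head) x (collapse_weight {u} x \<mu>)
    (\<psi>\<^sub>2(e3 := c\<^sub>2)) (\<psi>\<^sub>3(e3 := c\<^sub>3))"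
proof -
  have G: "oriented_graph V E tail head" and T: "two_edge_connected V E tail head"
    and S: "subcubic V E tail head" and uV: "u \<in> V"
    and iii: "bnd E tail head \<psi>\<^sub>3 u = \<mu> u" and iv: "\<mu> u = 0 \<longrightarrow> bnd E tail head \<psi>\<^sub>2 u = 0"
    and nz: "\<forall>e\<in>delta E tail head u. \<psi>\<^sub>2 e \<noteq> 0 \<or> \<psi>\<^sub>3 e \<noteq> 0"
    and sum0: "sum \<mu> V = 0" and ii: "\<forall>v\<in>V. \<mu> v \<noteq> 0 \<longrightarrow> degree E tail head v = 2"
    using P by (auto simp: extension_problem_def)
  have fin: "finite V" "finite E" and ends: "\<forall>e\<in>E. tail e \<in> V \<and> head e \<in> V"
    and nl: "\<forall>e\<in>E. tail e \<noteq> head e"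
    using G by (auto simp: oriented_graph_def)
  have e123: "e1 \<in> E" "e2 \<in> E" "e3 \<in> E" "tail e3 = x \<or> head e3 = x"
    using u x by (auto simp: delta_def)
  have xV: "x \<in> V" "x \<noteq> u" using e1 e123 ends nl by auto
  have e23: "e2 \<noteq> e3" using e2 e123(4) xy xV(2) by auto
  define r where "r = collapse {u} x"
  define E' where "E' = quotient_edges E tail head r"
  define \<mu>' where "\<mu>' = collapse_weight {u} x \<mu>"
  have V': "r ` V = V - {u}" using uV xV by (auto simp: r_def collapse_image)
  have delta_x: "delta E' (r \<circ> tail) (r \<circ> head) x = {e2, e3}"
    unfolding E'_def r_def delta_contract_edge[OF nl u(1) e1 e2 xy] using x u(2) by auto
  have delta_off: "delta E' (r \<circ> tail) (r \<circ> head) w = delta E tail head w" if "w \<noteq> u" "w \<noteq> x" for w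
    unfolding E'_def r_def using that nl by (intro delta_collapse_outside) auto
  have degree_x: "degree E' (r \<circ> tail) (r \<circ> head) x = 2" using delta_x e23 by (simp add: degree_def)
  have bnd_x: "bnd E' (r \<circ> tail) (r \<circ> head) \<phi> x = bnd E tail head \<phi> x + bnd E tail head \<phi> u"
    for \<phi> :: "'e \<Rightarrow> 'a::comm_ring_1"
    using bnd_collapse[OF G _ xV(1), of "{u}" x \<phi>] uV xV by (simp add: E'_def r_def collapse_weight_def)
  have e3_u: "tail e3 \<noteq> u" "head e3 \<noteq> u" using e123 u e23 x(2) by (auto simp: delta_def)
  have bnd_u: "bnd E tail head (\<phi>(e3 := c)) u = bnd E tail head \<phi> u" for \<phi> :: "'e \<Rightarrow> 'a::comm_ring_1" and c
    by (rule bnd_cong) (use e3_u in auto)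
  note root3 = bnd_root_values(1)[OF fin(2) x nl, where \<psi>\<^sub>3 = \<psi>\<^sub>3 and \<mu> = \<mu>, folded c\<^sub>3_def]
  note root2 = bnd_root_values(2,3)[OF fin(2) x nl, where \<psi>\<^sub>2 = \<psi>\<^sub>2 and \<mu> = \<mu> and u = u,
      folded c\<^sub>2_def]
  show ?thesis
    unfolding extension_problem_def E'_def[symmetric] r_def[symmetric] \<mu>'_def[symmetric]
  proof (intro conjI ballI impI)
    show "oriented_graph (V - {u}) E' (r \<circ> tail) (r \<circ> head)"
      using oriented_graph_quotient[OF G, of r] by (simp add: V' E'_def)
    show "two_edge_connected (V - {u}) E' (r \<circ> tail) (r \<circ> head)"
      using two_edge_connected_quotient[OF G T, of r] by (simp add: V' E'_def)
    show "subcubic (V - {u}) E' (r \<circ> tail) (r \<circ> head)"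
      unfolding subcubic_def
    proof
      fix w assume "w \<in> V - {u}"
      then show "degree E' (r \<circ> tail) (r \<circ> head) w \<le> 3"
        using S degree_x delta_off[of w] by (cases "w = x") (auto simp: subcubic_def degree_def)
    qed
    show "x \<in> V - {u}" using xV by simp
    show "degree E' (r \<circ> tail) (r \<circ> head) x = 2" by (rule degree_x)
    show "sum \<mu>' (V - {u}) = 0"
      using sum_collapse_weight[OF fin(1), of "{u}" x \<mu>] uV xV sum0 by (simp add: \<mu>'_def insert_absorb)
    show "degree E' (r \<circ> tail) (r \<circ> head) w = 2" if "w \<in> V - {u}" "\<mu>' w \<noteq> 0" for w
      using that ii degree_x delta_off[of w] by (cases "w = x") (auto simp: \<mu>'_def collapse_weight_def degree_def)
    show "bnd E' (r \<circ> tail) (r \<circ> head) (\<psi>\<^sub>3(e3 := c\<^sub>3)) x = \<mu>' x"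
      using root3 iii xV(2) by (simp add: bnd_x bnd_u \<mu>'_def collapse_weight_def)
    show "bnd E' (r \<circ> tail) (r \<circ> head) (\<psi>\<^sub>2(e3 := c\<^sub>2)) x = 0" if "\<mu>' x = 0"
    proof (cases "\<mu> x = 0")
      case True
      then show ?thesis using that iv root2(1) xV(2) by (simp add: bnd_x bnd_u \<mu>'_def collapse_weight_def)
    next
      case False
      then show ?thesis using that root2(2) xV(2)
        by (simp add: bnd_x bnd_u \<mu>'_def collapse_weight_def add.commute)
    qed
    show "(\<psi>\<^sub>2(e3 := c\<^sub>2)) e \<noteq> 0 \<or> (\<psi>\<^sub>3(e3 := c\<^sub>3)) e \<noteq> 0" if "e \<in> delta E' (r \<circ> tail) (r \<circ> head) x" for e
    proof -
      have "c\<^sub>2 \<noteq> 0 \<or> c\<^sub>3 \<noteq> 0"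
        unfolding c\<^sub>2_def c\<^sub>3_def by (rule root_values_nonzero[where \<mu> = \<mu>, OF fin(2) nl u e1 e123(3,4) iii nz])
      then show ?thesis using that delta_x e23 nz u by auto
    qed
  qed
qed

lemma is_extension_expand_root_edge:
  fixes V :: "'v set" and E :: "'e set" and \<psi>\<^sub>2 :: "'e \<Rightarrow> 2" and \<psi>\<^sub>3 :: "'e \<Rightarrow> 3"
  assumes P: "extension_problem V E tail head u \<mu> \<psi>\<^sub>2 \<psi>\<^sub>3"
    and u: "delta E tail head u = {e1, e2}" "e1 \<noteq> e2"
    and e1: "joins tail head e1 u x" and e2: "joins tail head e2 u y" and xy: "x \<noteq> y"
    and x: "delta E tail head x = {e1, e3}" "e1 \<noteq> e3"
    and x3: "bnd E tail head (\<psi>\<^sub>3(e3 := c\<^sub>3)) x = \<mu> x"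
    and x2: "\<mu> x = 0 \<Longrightarrow> bnd E tail head (\<psi>\<^sub>2(e3 := c\<^sub>2)) x = 0"
    and ext: "is_extension (V - {u}) (quotient_edges E tail head (collapse {u} x))
      (collapse {u} x \<circ> tail) (collapse {u} x \<circ> head) x (collapse_weight {u} x \<mu>)
      (\<psi>\<^sub>2(e3 := c\<^sub>2)) (\<psi>\<^sub>3(e3 := c\<^sub>3)) \<phi>\<^sub>2 \<phi>\<^sub>3"
  shows "is_extension V E tail head u \<mu> \<psi>\<^sub>2 \<psi>\<^sub>3 (\<phi>\<^sub>2(e1 := \<psi>\<^sub>2 e1)) (\<phi>\<^sub>3(e1 := \<psi>\<^sub>3 e1))"
proof -
  have G: "oriented_graph V E tail head" and uV: "u \<in> V"
    and iii: "bnd E tail head \<psi>\<^sub>3 u = \<mu> u" and iv: "\<mu> u = 0 \<longrightarrow> bnd E tail head \<psi>\<^sub>2 u = 0"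
    and nz: "\<forall>e\<in>delta E tail head u. \<psi>\<^sub>2 e \<noteq> 0 \<or> \<psi>\<^sub>3 e \<noteq> 0"
    using P by (auto simp: extension_problem_def)
  have ends: "\<forall>e\<in>E. tail e \<in> V \<and> head e \<in> V" and nl: "\<forall>e\<in>E. tail e \<noteq> head e"
    using G by (auto simp: oriented_graph_def)
  have e123: "e1 \<in> E" "e2 \<in> E" "e3 \<in> E" "tail e3 = x \<or> head e3 = x"
    using u x by (auto simp: delta_def)
  have xV: "x \<in> V" "x \<noteq> u" using e1 e123 ends nl by auto
  have e23: "e2 \<noteq> e3" using e2 e123(4) xy xV(2) by auto
  define r where "r = collapse {u} x"
  define E' where "E' = quotient_edges E tail head r"
  define \<phi>\<^sub>2' where "\<phi>\<^sub>2' = \<phi>\<^sub>2(e1 := \<psi>\<^sub>2 e1)"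
  define \<phi>\<^sub>3' where "\<phi>\<^sub>3' = \<phi>\<^sub>3(e1 := \<psi>\<^sub>3 e1)"
  have E': "E' = E - {e1}" unfolding E'_def r_def by (rule quotient_edges_contract_edge[OF nl u(1) e1 e2 xy])
  have delta_x: "delta E' (r \<circ> tail) (r \<circ> head) x = {e2, e3}"
    unfolding E'_def r_def delta_contract_edge[OF nl u(1) e1 e2 xy] using x u(2) by auto
  have s1: "\<forall>e\<in>{e2, e3}. \<phi>\<^sub>2 e = (\<psi>\<^sub>2(e3 := c\<^sub>2)) e \<and> \<phi>\<^sub>3 e = (\<psi>\<^sub>3(e3 := c\<^sub>3)) e"
    and s2: "\<forall>w\<in>V - {u}. bnd E' (r \<circ> tail) (r \<circ> head) \<phi>\<^sub>3 w = collapse_weight {u} x \<mu> w"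
    and s3: "\<forall>w\<in>V - {u}. collapse_weight {u} x \<mu> w = 0 \<longrightarrow> bnd E' (r \<circ> tail) (r \<circ> head) \<phi>\<^sub>2 w = 0"
    and s4: "\<forall>e\<in>E'. \<phi>\<^sub>2 e \<noteq> 0 \<or> \<phi>\<^sub>3 e \<noteq> 0"
    using ext delta_x by (auto simp: is_extension_def E'_def r_def)
  have at_u: "bnd E tail head \<phi>\<^sub>2' u = bnd E tail head \<psi>\<^sub>2 u" "bnd E tail head \<phi>\<^sub>3' u = bnd E tail head \<psi>\<^sub>3 u"
    using s1 e23 u by (auto intro!: bnd_cong simp: \<phi>\<^sub>2'_def \<phi>\<^sub>3'_def delta_def)
  have at_x: "bnd E tail head \<phi>\<^sub>2' x = bnd E tail head (\<psi>\<^sub>2(e3 := c\<^sub>2)) x"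
    "bnd E tail head \<phi>\<^sub>3' x = bnd E tail head (\<psi>\<^sub>3(e3 := c\<^sub>3)) x"
    using s1 x by (auto intro!: bnd_cong simp: \<phi>\<^sub>2'_def \<phi>\<^sub>3'_def delta_def)
  have e1_ux: "tail e1 \<in> insert x {u}" "head e1 \<in> insert x {u}" using e1 by auto
  have off: "bnd E' (r \<circ> tail) (r \<circ> head) \<phi>\<^sub>3 w = bnd E tail head \<phi>\<^sub>3' w"
    "bnd E' (r \<circ> tail) (r \<circ> head) \<phi>\<^sub>2 w = bnd E tail head \<phi>\<^sub>2' w"
    if "w \<in> V" "w \<noteq> u" "w \<noteq> x" for w
    using bnd_collapse_agree_off[OF G _ xV(1) _ e1_ux, of w \<phi>\<^sub>3' \<phi>\<^sub>3]
      bnd_collapse_agree_off[OF G _ xV(1) _ e1_ux, of w \<phi>\<^sub>2' \<phi>\<^sub>2] that uV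
    by (simp_all add: E'_def r_def \<phi>\<^sub>2'_def \<phi>\<^sub>3'_def collapse_weight_def)
  show ?thesis
    unfolding is_extension_def \<phi>\<^sub>2'_def[symmetric] \<phi>\<^sub>3'_def[symmetric]
  proof (intro conjI ballI impI)
    fix e assume "e \<in> delta E tail head u"
    then show "\<phi>\<^sub>2' e = \<psi>\<^sub>2 e" "\<phi>\<^sub>3' e = \<psi>\<^sub>3 e" using s1 u e23 by (auto simp: \<phi>\<^sub>2'_def \<phi>\<^sub>3'_def)
  next
    fix w assume "w \<in> V"
    then show "bnd E tail head \<phi>\<^sub>3' w = \<mu> w"
      using at_u at_x iii x3 s2 off(1)[of w]
      by (cases "w = u"; cases "w = x") (auto simp: collapse_weight_def)
  next
    fix w assume "w \<in> V" "\<mu> w = 0"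
    then show "bnd E tail head \<phi>\<^sub>2' w = 0"
      using at_u at_x iv x2 s3 off(2)[of w]
      by (cases "w = u"; cases "w = x") (auto simp: collapse_weight_def)
  next
    fix e assume "e \<in> E"
    then show "\<phi>\<^sub>2' e \<noteq> 0 \<or> \<phi>\<^sub>3' e \<noteq> 0"
      using nz u s4 E' by (cases "e = e1") (auto simp: \<phi>\<^sub>2'_def \<phi>\<^sub>3'_def)
  qed
qed

lemma card_cut_eq_2:
  assumes G: "oriented_graph V E tail head" and T: "two_edge_connected V E tail head"
    and X: "X \<subseteq> V" "u \<in> X" "b \<in> V - X" "card (cut_edges E tail head X) \<le> 2"
  shows "card (cut_edges E tail head X) = 2"
proof -
  have "2 \<le> card (cut_edges E tail head X)"
    by (rule two_edge_connectedD[OF G T X(1)]) (use X in auto)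
  then show ?thesis using X(4) by simp
qed

lemma extension_problem_split_inner:
  fixes V :: "'v set" and E :: "'e set"
  assumes P: "extension_problem V E tail head u \<mu> \<psi>\<^sub>2 \<psi>\<^sub>3"
    and X: "X \<subseteq> V" "u \<in> X" "card (cut_edges E tail head X) \<le> 2" and b: "b \<in> V - X"
  shows "extension_problem (insert b X) (quotient_edges E tail head (collapse (V - X) b))
    (collapse (V - X) b \<circ> tail) (collapse (V - X) b \<circ> head) u (collapse_weight (V - X) b \<mu>) \<psi>\<^sub>2 \<psi>\<^sub>3"
proof -
  have G: "oriented_graph V E tail head" and T: "two_edge_connected V E tail head"
    and S: "subcubic V E tail head" and uV: "u \<in> V" and du: "degree E tail head u = 2"
    and iii: "bnd E tail head \<psi>\<^sub>3 u = \<mu> u" and iv: "\<mu> u = 0 \<longrightarrow> bnd E tail head \<psi>\<^sub>2 u = 0"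
    and nz: "\<forall>e\<in>delta E tail head u. \<psi>\<^sub>2 e \<noteq> 0 \<or> \<psi>\<^sub>3 e \<noteq> 0"
    and sum0: "sum \<mu> V = 0" and ii: "\<forall>v\<in>V. \<mu> v \<noteq> 0 \<longrightarrow> degree E tail head v = 2"
    using P by (auto simp: extension_problem_def)
  have fin: "finite V" and ends: "\<forall>e\<in>E. tail e \<in> V \<and> head e \<in> V"
    and nl: "\<forall>e\<in>E. tail e \<noteq> head e"
    using G by (auto simp: oriented_graph_def)
  have ub: "u \<noteq> b" using X(2) b by auto
  define r where "r = collapse (V - X) b"
  define E' where "E' = quotient_edges E tail head r"
  define \<mu>' where "\<mu>' = collapse_weight (V - X) b \<mu>"
  have V': "r ` V = insert b X" using X(1) b by (auto simp: r_def collapse_image)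
  have delta_X: "delta E' (r \<circ> tail) (r \<circ> head) w = delta E tail head w" if "w \<in> X" for w
    unfolding E'_def r_def using that nl b by (intro delta_collapse_outside) auto
  have "delta E' (r \<circ> tail) (r \<circ> head) b = cut_edges E tail head X"
    unfolding E'_def r_def delta_collapse_target using b cut_edges_complement[OF ends, of X]
    by (simp add: insert_absorb)
  then have degree_b: "degree E' (r \<circ> tail) (r \<circ> head) b = 2"
    using card_cut_eq_2[OF G T X(1,2) b X(3)] by (simp add: degree_def)
  have bnd_X: "bnd E' (r \<circ> tail) (r \<circ> head) \<phi> w = bnd E tail head \<phi> w" if "w \<in> X"
    for w and \<phi> :: "'e \<Rightarrow> 'a::comm_ring_1"
    using bnd_collapse[OF G _ _, of "V - X" b w \<phi>] that X(1) b by (auto simp: E'_def r_def collapse_weight_def)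
  show ?thesis
    unfolding extension_problem_def E'_def[symmetric] r_def[symmetric] \<mu>'_def[symmetric]
  proof (intro conjI ballI impI)
    show "oriented_graph (insert b X) E' (r \<circ> tail) (r \<circ> head)"
      using oriented_graph_quotient[OF G, of r] by (simp add: V' E'_def)
    show "two_edge_connected (insert b X) E' (r \<circ> tail) (r \<circ> head)"
      using two_edge_connected_quotient[OF G T, of r] by (simp add: V' E'_def)
    show "subcubic (insert b X) E' (r \<circ> tail) (r \<circ> head)"
      using S X(1) degree_b delta_X by (auto simp: subcubic_def degree_def)
    show "u \<in> insert b X" using X(2) by simp
    show "degree E' (r \<circ> tail) (r \<circ> head) u = 2" using du delta_X[OF X(2)] by (simp add: degree_def)
    show "sum \<mu>' (insert b X) = 0"
      using sum_collapse_weight[OF fin, of "V - X" b \<mu>] X(1) b sum0 by (simp add: \<mu>'_def double_diff)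
    show "degree E' (r \<circ> tail) (r \<circ> head) w = 2" if "w \<in> insert b X" "\<mu>' w \<noteq> 0" for w
      using that ii degree_b delta_X[of w] X(1) b
      by (cases "w = b") (auto simp: \<mu>'_def collapse_weight_def degree_def)
    show "bnd E' (r \<circ> tail) (r \<circ> head) \<psi>\<^sub>3 u = \<mu>' u"
      using iii X(2) ub by (simp add: bnd_X \<mu>'_def collapse_weight_def)
    show "bnd E' (r \<circ> tail) (r \<circ> head) \<psi>\<^sub>2 u = 0" if "\<mu>' u = 0"
      using iv that X(2) ub by (simp add: bnd_X \<mu>'_def collapse_weight_def)
    show "\<psi>\<^sub>2 e \<noteq> 0 \<or> \<psi>\<^sub>3 e \<noteq> 0" if "e \<in> delta E' (r \<circ> tail) (r \<circ> head) u" for e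
      using that nz delta_X[OF X(2)] by auto
  qed
qed

lemma extension_problem_split_outer:
  fixes V :: "'v set" and E :: "'e set"
  assumes P: "extension_problem V E tail head u \<mu> \<psi>\<^sub>2 \<psi>\<^sub>3"
    and X: "X \<subseteq> V" "u \<in> X" "card (cut_edges E tail head X) \<le> 2" and b: "b \<in> V - X"
    and inner: "is_extension (insert b X) (quotient_edges E tail head (collapse (V - X) b))
      (collapse (V - X) b \<circ> tail) (collapse (V - X) b \<circ> head) u (collapse_weight (V - X) b \<mu>) \<psi>\<^sub>2 \<psi>\<^sub>3 \<phi>\<^sub>2 \<phi>\<^sub>3"
  shows "extension_problem (insert u (V - X)) (quotient_edges E tail head (collapse X u))
    (collapse X u \<circ> tail) (collapse X u \<circ> head) u (collapse_weight X u \<mu>) \<phi>\<^sub>2 \<phi>\<^sub>3"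
proof -
  have G: "oriented_graph V E tail head" and T: "two_edge_connected V E tail head"
    and S: "subcubic V E tail head" and uV: "u \<in> V"
    and sum0: "sum \<mu> V = 0" and ii: "\<forall>v\<in>V. \<mu> v \<noteq> 0 \<longrightarrow> degree E tail head v = 2"
    using P by (auto simp: extension_problem_def)
  have fin: "finite V" "finite E" and ends: "\<forall>e\<in>E. tail e \<in> V \<and> head e \<in> V"
    and nl: "\<forall>e\<in>E. tail e \<noteq> head e"
    using G by (auto simp: oriented_graph_def)
  have ub: "u \<noteq> b" using X(2) b by auto
  have insert_b: "insert b (V - X) = V - X" using b by auto
  define rA where "rA = collapse (V - X) b"
  define EA where "EA = quotient_edges E tail head rA"
  define r where "r = collapse X u"
  define E' where "E' = quotient_edges E tail head r"
  define \<mu>' where "\<mu>' = collapse_weight X u \<mu>"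
  have s2: "\<forall>w\<in>insert b X. bnd EA (rA \<circ> tail) (rA \<circ> head) \<phi>\<^sub>3 w = collapse_weight (V - X) b \<mu> w"
    and s3: "\<forall>w\<in>insert b X. collapse_weight (V - X) b \<mu> w = 0 \<longrightarrow> bnd EA (rA \<circ> tail) (rA \<circ> head) \<phi>\<^sub>2 w = 0"
    and s4: "\<forall>e\<in>EA. \<phi>\<^sub>2 e \<noteq> 0 \<or> \<phi>\<^sub>3 e \<noteq> 0"
    using inner by (auto simp: is_extension_def EA_def rA_def)
  have bnd_A: "bnd EA (rA \<circ> tail) (rA \<circ> head) \<phi> w =
      (if w = b then sum (bnd E tail head \<phi>) (V - X) else bnd E tail head \<phi> w)"
    if "w \<in> insert b X" for w and \<phi> :: "'e \<Rightarrow> 'a::comm_ring_1"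
    using bnd_collapse[OF G _ _, of "V - X" b w \<phi>] that X(1) b
    by (auto simp: EA_def rA_def collapse_weight_def insert_absorb)
  have bnd_u: "bnd E' (r \<circ> tail) (r \<circ> head) \<phi> u = sum (bnd E tail head \<phi>) X" for \<phi> :: "'e \<Rightarrow> 'a::comm_ring_1"
    using bnd_collapse[OF G X(1) uV, of u \<phi>] X(2) by (simp add: E'_def r_def collapse_weight_def insert_absorb)
  have V': "r ` V = insert u (V - X)" using X(1) uV by (auto simp: r_def collapse_image)
  have delta_u: "delta E' (r \<circ> tail) (r \<circ> head) u = cut_edges E tail head X"
    unfolding E'_def r_def delta_collapse_target using X(2) by (simp add: insert_absorb)
  have delta_off: "delta E' (r \<circ> tail) (r \<circ> head) w = delta E tail head w" if "w \<in> V - X" for w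
    unfolding E'_def r_def using that nl X(2) by (intro delta_collapse_outside) auto
  have degree_u: "degree E' (r \<circ> tail) (r \<circ> head) u = 2"
    using card_cut_eq_2[OF G T X(1,2) b X(3)] by (simp add: degree_def delta_u)
  have sum_V: "sum f V = sum f X + sum f (V - X)" for f :: "'v \<Rightarrow> 'a::comm_monoid_add"
    using fin(1) X(1) by (metis add.commute sum.subset_diff)
  show ?thesis
    unfolding extension_problem_def E'_def[symmetric] r_def[symmetric] \<mu>'_def[symmetric]
  proof (intro conjI ballI impI)
    show "oriented_graph (insert u (V - X)) E' (r \<circ> tail) (r \<circ> head)"
      using oriented_graph_quotient[OF G, of r] by (simp add: V' E'_def)
    show "two_edge_connected (insert u (V - X)) E' (r \<circ> tail) (r \<circ> head)"
      using two_edge_connected_quotient[OF G T, of r] by (simp add: V' E'_def)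
    show "subcubic (insert u (V - X)) E' (r \<circ> tail) (r \<circ> head)"
      using S degree_u delta_off by (auto simp: subcubic_def degree_def)
    show "u \<in> insert u (V - X)" by simp
    show "degree E' (r \<circ> tail) (r \<circ> head) u = 2" by (rule degree_u)
    show "sum \<mu>' (insert u (V - X)) = 0"
      using sum_collapse_weight[OF fin(1) X(1) uV, of \<mu>] sum0 by (simp add: \<mu>'_def)
    show "degree E' (r \<circ> tail) (r \<circ> head) w = 2" if "w \<in> insert u (V - X)" "\<mu>' w \<noteq> 0" for w
      using that ii degree_u delta_off[of w] X(2)
      by (cases "w = u") (auto simp: \<mu>'_def collapse_weight_def degree_def)
    show "bnd E' (r \<circ> tail) (r \<circ> head) \<phi>\<^sub>3 u = \<mu>' u"
    proof -
      have "bnd E tail head \<phi>\<^sub>3 w = \<mu> w" if "w \<in> X" for w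
      proof -
        have "w \<noteq> b" using that b by auto
        then show ?thesis using s2 bnd_A[of w \<phi>\<^sub>3] that by (simp add: collapse_weight_def)
      qed
      then show ?thesis using X(2) by (simp add: bnd_u \<mu>'_def collapse_weight_def insert_absorb)
    qed
    show "bnd E' (r \<circ> tail) (r \<circ> head) \<phi>\<^sub>2 u = 0" if "\<mu>' u = 0"
    proof -
      have "sum \<mu> (V - X) = 0" using that sum0 X(2) sum_V[of \<mu>]
        by (simp add: \<mu>'_def collapse_weight_def insert_absorb)
      then have "sum (bnd E tail head \<phi>\<^sub>2) (V - X) = 0"
        using s3 bnd_A[of b \<phi>\<^sub>2] by (simp add: collapse_weight_def insert_b)
      then show ?thesis
        using sum_bnd[OF fin ends, of \<phi>\<^sub>2] sum_V[of "bnd E tail head \<phi>\<^sub>2"] by (simp add: bnd_u)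
    qed
    show "\<phi>\<^sub>2 e \<noteq> 0 \<or> \<phi>\<^sub>3 e \<noteq> 0" if "e \<in> delta E' (r \<circ> tail) (r \<circ> head) u" for e
    proof -
      have "e \<in> EA"
        using that ends b unfolding delta_u EA_def rA_def quotient_edges_def collapse_def cut_edges_def
        by auto
      then show ?thesis using s4 by blast
    qed
  qed
qed

lemma is_extension_glue:
  fixes V :: "'v set" and E :: "'e set"
  assumes P: "extension_problem V E tail head u \<mu> \<psi>\<^sub>2 \<psi>\<^sub>3"
    and X: "X \<subseteq> V" "u \<in> X" and b: "b \<in> V - X"
    and inner: "is_extension (insert b X) (quotient_edges E tail head (collapse (V - X) b))
      (collapse (V - X) b \<circ> tail) (collapse (V - X) b \<circ> head) u (collapse_weight (V - X) b \<mu>) \<psi>\<^sub>2 \<psi>\<^sub>3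
      \<phi>\<^sub>2 \<phi>\<^sub>3"
    and outer: "is_extension (insert u (V - X)) (quotient_edges E tail head (collapse X u))
      (collapse X u \<circ> tail) (collapse X u \<circ> head) u (collapse_weight X u \<mu>) \<phi>\<^sub>2 \<phi>\<^sub>3 \<phi>\<^sub>2' \<phi>\<^sub>3'"
  shows "is_extension V E tail head u \<mu> \<psi>\<^sub>2 \<psi>\<^sub>3
    (\<lambda>e. if tail e \<notin> X \<and> head e \<notin> X then \<phi>\<^sub>2' e else \<phi>\<^sub>2 e)
    (\<lambda>e. if tail e \<notin> X \<and> head e \<notin> X then \<phi>\<^sub>3' e else \<phi>\<^sub>3 e)"
proof -
  have G: "oriented_graph V E tail head" and uV: "u \<in> V"
    using P by (auto simp: extension_problem_def)
  have ends: "\<forall>e\<in>E. tail e \<in> V \<and> head e \<in> V" and nl: "\<forall>e\<in>E. tail e \<noteq> head e"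
    using G by (auto simp: oriented_graph_def)
  define rA where "rA = collapse (V - X) b"
  define EA where "EA = quotient_edges E tail head rA"
  define rB where "rB = collapse X u"
  define EB where "EB = quotient_edges E tail head rB"
  define \<chi>\<^sub>2 where "\<chi>\<^sub>2 e = (if tail e \<notin> X \<and> head e \<notin> X then \<phi>\<^sub>2' e else \<phi>\<^sub>2 e)" for e
  define \<chi>\<^sub>3 where "\<chi>\<^sub>3 e = (if tail e \<notin> X \<and> head e \<notin> X then \<phi>\<^sub>3' e else \<phi>\<^sub>3 e)" for e
  have EA: "EA = {e\<in>E. \<not> (tail e \<notin> X \<and> head e \<notin> X)}"
    unfolding EA_def rA_def quotient_edges_collapse[OF nl] using b ends by auto
  have EB: "EB = {e\<in>E. \<not> (tail e \<in> X \<and> head e \<in> X)}"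
    unfolding EB_def rB_def quotient_edges_collapse[OF nl] using X(2) by (simp add: insert_absorb)
  have a1: "\<forall>e\<in>delta EA (rA \<circ> tail) (rA \<circ> head) u. \<phi>\<^sub>2 e = \<psi>\<^sub>2 e \<and> \<phi>\<^sub>3 e = \<psi>\<^sub>3 e"
    and a2: "\<forall>w\<in>insert b X. bnd EA (rA \<circ> tail) (rA \<circ> head) \<phi>\<^sub>3 w = collapse_weight (V - X) b \<mu> w"
    and a3: "\<forall>w\<in>insert b X. collapse_weight (V - X) b \<mu> w = 0 \<longrightarrow> bnd EA (rA \<circ> tail) (rA \<circ> head) \<phi>\<^sub>2 w = 0"
    and a4: "\<forall>e\<in>EA. \<phi>\<^sub>2 e \<noteq> 0 \<or> \<phi>\<^sub>3 e \<noteq> 0"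
    using inner by (auto simp: is_extension_def EA_def rA_def)
  have b1: "\<forall>e\<in>delta EB (rB \<circ> tail) (rB \<circ> head) u. \<phi>\<^sub>2' e = \<phi>\<^sub>2 e \<and> \<phi>\<^sub>3' e = \<phi>\<^sub>3 e"
    and b2: "\<forall>w\<in>insert u (V - X). bnd EB (rB \<circ> tail) (rB \<circ> head) \<phi>\<^sub>3' w = collapse_weight X u \<mu> w"
    and b3: "\<forall>w\<in>insert u (V - X). collapse_weight X u \<mu> w = 0 \<longrightarrow> bnd EB (rB \<circ> tail) (rB \<circ> head) \<phi>\<^sub>2' w = 0"
    and b4: "\<forall>e\<in>EB. \<phi>\<^sub>2' e \<noteq> 0 \<or> \<phi>\<^sub>3' e \<noteq> 0"
    using outer by (auto simp: is_extension_def EB_def rB_def)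
  have delta_A: "delta EA (rA \<circ> tail) (rA \<circ> head) w = delta E tail head w" if "w \<in> X" for w
    unfolding EA_def rA_def using that nl b by (intro delta_collapse_outside) auto
  have delta_B: "delta EB (rB \<circ> tail) (rB \<circ> head) u = cut_edges E tail head X"
    unfolding EB_def rB_def delta_collapse_target using X(2) by (simp add: insert_absorb)
  have bnd_A: "bnd E tail head \<phi> w = bnd EA (rA \<circ> tail) (rA \<circ> head) \<phi> w" if "w \<in> X"
    for w and \<phi> :: "'e \<Rightarrow> 'a::comm_ring_1"
    using bnd_collapse[OF G _ _, of "V - X" b w \<phi>] that X(1) b by (auto simp: EA_def rA_def collapse_weight_def)
  have bnd_B: "bnd E tail head \<phi> w = bnd EB (rB \<circ> tail) (rB \<circ> head) \<phi> w" if "w \<in> V - X"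
    for w and \<phi> :: "'e \<Rightarrow> 'a::comm_ring_1"
    using bnd_collapse[OF G X(1) uV, of w \<phi>] that X(2) by (auto simp: EB_def rB_def collapse_weight_def)
  have on_A: "\<chi>\<^sub>2 e = \<phi>\<^sub>2 e \<and> \<chi>\<^sub>3 e = \<phi>\<^sub>3 e" if "e \<in> E" "tail e = w \<or> head e = w" "w \<in> X" for e w
    using that by (auto simp: \<chi>\<^sub>2_def \<chi>\<^sub>3_def)
  have on_B: "\<chi>\<^sub>2 e = \<phi>\<^sub>2' e \<and> \<chi>\<^sub>3 e = \<phi>\<^sub>3' e" if "e \<in> E" "tail e = w \<or> head e = w" "w \<in> V - X" for e w
  proof (cases "tail e \<notin> X \<and> head e \<notin> X")
    case False
    then have "e \<in> delta EB (rB \<circ> tail) (rB \<circ> head) u"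
      using that unfolding delta_B cut_edges_def by auto
    then show ?thesis using False b1 by (auto simp: \<chi>\<^sub>2_def \<chi>\<^sub>3_def)
  qed (auto simp: \<chi>\<^sub>2_def \<chi>\<^sub>3_def)
  show ?thesis
    unfolding is_extension_def \<chi>\<^sub>2_def[symmetric] \<chi>\<^sub>3_def[symmetric]
  proof (intro conjI ballI impI)
    fix e assume "e \<in> delta E tail head u"
    then show "\<chi>\<^sub>2 e = \<psi>\<^sub>2 e" "\<chi>\<^sub>3 e = \<psi>\<^sub>3 e"
      using a1 delta_A[OF X(2)] on_A[of e u] X(2) by (auto simp: delta_def)
  next
    fix w assume w: "w \<in> V"
    show "bnd E tail head \<chi>\<^sub>3 w = \<mu> w"
    proof (cases "w \<in> X")
      case True
      then have "bnd E tail head \<chi>\<^sub>3 w = bnd EA (rA \<circ> tail) (rA \<circ> head) \<phi>\<^sub>3 w"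
        unfolding bnd_A[OF True, symmetric] using on_A[of _ w] by (intro bnd_cong) blast
      then show ?thesis using a2 True b by (auto simp: collapse_weight_def)
    next
      case False
      then have wB: "w \<in> V - X" using w by blast
      then have "bnd E tail head \<chi>\<^sub>3 w = bnd EB (rB \<circ> tail) (rB \<circ> head) \<phi>\<^sub>3' w"
        unfolding bnd_B[OF wB, symmetric] using on_B[of _ w] by (intro bnd_cong) blast
      then show ?thesis using b2 w False X(2) by (auto simp: collapse_weight_def)
    qed
  next
    fix w assume w: "w \<in> V" "\<mu> w = 0"
    show "bnd E tail head \<chi>\<^sub>2 w = 0"
    proof (cases "w \<in> X")
      case True
      then have "bnd E tail head \<chi>\<^sub>2 w = bnd EA (rA \<circ> tail) (rA \<circ> head) \<phi>\<^sub>2 w"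
        unfolding bnd_A[OF True, symmetric] using on_A[of _ w] by (intro bnd_cong) blast
      moreover have "w \<noteq> b" using True b by blast
      ultimately show ?thesis using a3 w True by (simp add: collapse_weight_def)
    next
      case False
      then have wB: "w \<in> V - X" using w by blast
      then have "bnd E tail head \<chi>\<^sub>2 w = bnd EB (rB \<circ> tail) (rB \<circ> head) \<phi>\<^sub>2' w"
        unfolding bnd_B[OF wB, symmetric] using on_B[of _ w] by (intro bnd_cong) blast
      moreover have "w \<noteq> u" using False X(2) by blast
      ultimately show ?thesis using b3 wB w(2) by (simp add: collapse_weight_def)
    qed
  next
    fix e assume "e \<in> E"
    then show "\<chi>\<^sub>2 e \<noteq> 0 \<or> \<chi>\<^sub>3 e \<noteq> 0"
      using a4 b4 nl by (auto simp: \<chi>\<^sub>2_def \<chi>\<^sub>3_def EA EB)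
  qed
qed

section \<open>Unavoidable configurations\<close>

lemma degree_2_distinct_neighbours:
  assumes G: "oriented_graph V E tail head" and T: "two_edge_connected V E tail head"
    and S: "subcubic V E tail head" and w: "degree E tail head w = 2" "f \<in> delta E tail head w"
    and big: "\<not> V \<subseteq> {w, other_end tail head w f}"
  obtains g where "delta E tail head w = {f, g}" "f \<noteq> g"
    "other_end tail head w g \<noteq> other_end tail head w f"
proof -
  have nl: "\<forall>e\<in>E. tail e \<noteq> head e" using G by (simp add: oriented_graph_def)
  obtain g where g: "delta E tail head w = {f, g}" "f \<noteq> g"
    using w by (auto simp: degree_def card_2_iff doubleton_eq_iff)
  have fg: "f \<in> E" "g \<in> E" "tail f = w \<or> head f = w" "tail g = w \<or> head g = w"
    using g by (auto simp: delta_def)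
  have "other_end tail head w g \<noteq> other_end tail head w f"
  proof
    assume same: "other_end tail head w g = other_end tail head w f"
    have "joins tail head f w (other_end tail head w f)" "joins tail head g w (other_end tail head w f)"
      using joins_other_end[of tail f head w] joins_other_end[of tail g head w] nl fg same by auto
    then show False using parallel_edges_span[OF G T S g] big by blast
  qed
  then show thesis using that g by blast
qed

lemma degree_3_off_root:
  assumes P: "extension_problem V E tail head u \<mu> \<psi>\<^sub>2 \<psi>\<^sub>3" and big: "\<And>a b. \<not> V \<subseteq> {a, b}"
    and root_nbrs: "\<And>e. e \<in> delta E tail head u \<Longrightarrow> degree E tail head (other_end tail head u e) \<noteq> 2"
    and no_contract: "\<And>v f g p q. v \<in> V \<Longrightarrow> v \<noteq> u \<Longrightarrow> p \<noteq> u \<Longrightarrow> delta E tail head v = {f, g} \<Longrightarrow>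
      joins tail head f v p \<Longrightarrow> joins tail head g v q \<Longrightarrow> p \<noteq> q \<Longrightarrow>
      \<mu> v = 0 \<or> (degree E tail head p = 2 \<and> \<mu> p \<noteq> 0) \<Longrightarrow> False"
    and no_vertex: "\<And>s f g p q. s \<in> V \<Longrightarrow> delta E tail head s = {f, g} \<Longrightarrow> f \<noteq> g \<Longrightarrow>
      joins tail head f s p \<Longrightarrow> joins tail head g s q \<Longrightarrow> p \<noteq> q \<Longrightarrow> u \<noteq> s \<Longrightarrow> u \<noteq> p \<Longrightarrow> u \<noteq> q \<Longrightarrow>
      degree E tail head p = 3 \<Longrightarrow> degree E tail head q = 3 \<Longrightarrow> \<mu> s \<noteq> 0 \<Longrightarrow> False"
    and w: "w \<in> V" "w \<noteq> u"
  shows "degree E tail head w = 3"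
proof -
  have G: "oriented_graph V E tail head" and T: "two_edge_connected V E tail head"
    and S: "subcubic V E tail head" and uV: "u \<in> V"
    using P by (auto simp: extension_problem_def)
  have ends: "\<forall>e\<in>E. tail e \<in> V \<and> head e \<in> V" and nl: "\<forall>e\<in>E. tail e \<noteq> head e"
    using G by (auto simp: oriented_graph_def)
  have deg_2_3: "degree E tail head a = 2 \<or> degree E tail head a = 3" if "a \<in> V" "a \<noteq> u" for a
    using two_le_degree[OF G T that(1) uV that(2)[symmetric]] S that(1) by (auto simp: subcubic_def)
  have split2: thesis if a: "degree E tail head a = 2" "h \<in> delta E tail head a"
    and cont: "\<And>h'. delta E tail head a = {h, h'} \<Longrightarrow> h \<noteq> h' \<Longrightarrow>
      joins tail head h a (other_end tail head a h) \<Longrightarrow> joins tail head h' a (other_end tail head a h') \<Longrightarrow>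
      other_end tail head a h \<noteq> other_end tail head a h' \<Longrightarrow> thesis" for a h thesis
  proof -
    obtain h' where h': "delta E tail head a = {h, h'}" "h \<noteq> h'"
      "other_end tail head a h' \<noteq> other_end tail head a h"
      using degree_2_distinct_neighbours[OF G T S a big] by blast
    have "h \<in> E" "h' \<in> E" "tail h = a \<or> head h = a" "tail h' = a \<or> head h' = a"
      using h' by (auto simp: delta_def)
    then have "joins tail head h a (other_end tail head a h)" "joins tail head h' a (other_end tail head a h')"
      using nl by (auto simp: other_end_def)
    from cont[OF h'(1,2) this h'(3)[symmetric]] show thesis .
  qed
  show ?thesis
  proof (rule ccontr)
    assume "degree E tail head w \<noteq> 3"
    then have dw: "degree E tail head w = 2" using deg_2_3 w by blast
    then obtain f where f: "f \<in> delta E tail head w" by (fastforce simp: degree_def)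
    text \<open>Each neighbour a of w is not the root and has degree 3; otherwise an edge at w or a
      could be contracted.\<close>
    have nbr: "a \<noteq> u \<and> degree E tail head a = 3 \<and> \<mu> w \<noteq> 0"
      if h: "delta E tail head w = {h, h'}" "h \<noteq> h'" "joins tail head h w a" "joins tail head h' w a'" "a \<noteq> a'"
      for h h' a a'
    proof (intro conjI)
      have hE: "h \<in> E" using h(1) by (auto simp: delta_def)
      then have aV: "a \<in> V" using h(3) ends by auto
      show au: "a \<noteq> u"
      proof
        assume "a = u"
        then have "h \<in> delta E tail head u" "other_end tail head u h = w"
          using h(3) hE nl by (auto simp: delta_def intro: other_end_eq)
        then show False using root_nbrs dw by metis
      qed
      show \<mu>w: "\<mu> w \<noteq> 0" using no_contract[OF w au h(1,3,4,5)] by blast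
      show "degree E tail head a = 3"
      proof (rule ccontr)
        assume "degree E tail head a \<noteq> 3"
        then have da: "degree E tail head a = 2" using deg_2_3 aV au by blast
        show False
        proof (cases "\<mu> a = 0")
          case False
          then show False using no_contract[OF w au h(1,3,4,5)] da by blast
        next
          case True
          have "h \<in> delta E tail head a" using h(3) hE by (auto simp: delta_def)
          then obtain k where k: "delta E tail head a = {h, k}"
            "joins tail head k a (other_end tail head a k)" "other_end tail head a h \<noteq> other_end tail head a k"
            using split2[OF da] by blast
          have "other_end tail head a h = w" using h(3) hE nl by (auto intro: other_end_eq)
          moreover have "joins tail head h a w" using h(3) by auto
          ultimately show False using no_contract[OF aV au w(2) k(1) _ k(2)] k(3) True by simp
        qed
      qed
    qed
    obtain g where g: "delta E tail head w = {f, g}" "f \<noteq> g"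
      "joins tail head f w (other_end tail head w f)" "joins tail head g w (other_end tail head w g)"
      "other_end tail head w f \<noteq> other_end tail head w g"
      using split2[OF dw f] by blast
    have "delta E tail head w = {g, f}" using g(1) by (simp add: insert_commute)
    from nbr[OF g] nbr[OF this g(2)[symmetric] g(4,3) g(5)[symmetric]]
    show False using no_vertex[OF w(1) g] w(2) by metis
  qed
qed

lemma reducible_configuration:
  assumes P: "extension_problem V E tail head u \<mu> \<psi>\<^sub>2 \<psi>\<^sub>3" and nonbase: "\<not> E \<subseteq> delta E tail head u"
  obtains (two_cut) X ea eb where "X \<subseteq> V" "u \<in> X" "card (cut_edges E tail head X) \<le> 2"
      "ea \<in> E" "tail ea \<in> X" "head ea \<in> X" "eb \<in> E" "tail eb \<in> V - X" "head eb \<in> V - X"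
  | (root) e1 e2 e3 x y where "delta E tail head u = {e1, e2}" "e1 \<noteq> e2"
      "joins tail head e1 u x" "joins tail head e2 u y" "x \<noteq> y"
      "delta E tail head x = {e1, e3}" "e1 \<noteq> e3"
  | (contract) v f g p q where "v \<in> V" "v \<noteq> u" "delta E tail head v = {f, g}"
      "joins tail head f v p" "joins tail head g v q" "p \<noteq> q" "p \<noteq> u"
      "\<mu> v = 0 \<or> (degree E tail head p = 2 \<and> \<mu> p \<noteq> 0)"
  | (vertex) s f g p q where "\<not> nontrivial_2_cut V E tail head" "s \<in> V" "delta E tail head s = {f, g}"
      "f \<noteq> g" "joins tail head f s p" "joins tail head g s q" "p \<noteq> q" "u \<noteq> s" "u \<noteq> p" "u \<noteq> q"
      "degree E tail head p = 3" "degree E tail head q = 3" "\<mu> s \<noteq> 0"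
  | (edge) e0 where "\<not> nontrivial_2_cut V E tail head" "e0 \<in> E" "tail e0 \<noteq> u" "head e0 \<noteq> u"
      "degree E tail head (tail e0) = 3" "degree E tail head (head e0) = 3" "\<forall>v\<in>V. \<mu> v = 0"
proof (rule ccontr)
  assume none: "\<not> thesis"
  have G: "oriented_graph V E tail head" and T: "two_edge_connected V E tail head"
    and S: "subcubic V E tail head" and u: "u \<in> V" "degree E tail head u = 2"
    and sum0: "sum \<mu> V = 0" and ii: "\<forall>v\<in>V. \<mu> v \<noteq> 0 \<longrightarrow> degree E tail head v = 2"
    using P by (auto simp: extension_problem_def)
  have fin: "finite V" and ends: "\<forall>e\<in>E. tail e \<in> V \<and> head e \<in> V"
    and nl: "\<forall>e\<in>E. tail e \<noteq> head e"
    using G by (auto simp: oriented_graph_def)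
  obtain e0 where e0: "e0 \<in> E" "tail e0 \<noteq> u" "head e0 \<noteq> u"
    using nonbase by (auto simp: delta_def)
  have big: "\<not> V \<subseteq> {a, b}" for a b
    using e0 ends nl u(1) by (metis insert_iff singletonD subset_iff)
  have N: "\<not> nontrivial_2_cut V E tail head"
  proof
    assume "nontrivial_2_cut V E tail head"
    then obtain X where "X \<subseteq> V" "u \<in> X" "card (cut_edges E tail head X) \<le> 2"
      "\<exists>e\<in>E. tail e \<in> X \<and> head e \<in> X" "\<exists>e\<in>E. tail e \<in> V - X \<and> head e \<in> V - X"
      using nontrivial_2_cut_containing[OF G _ u(1)] by blast
    then show False using two_cut none by blast
  qed
  obtain e1 e2 where e12: "delta E tail head u = {e1, e2}" "e1 \<noteq> e2"
    "other_end tail head u e2 \<noteq> other_end tail head u e1"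
    using degree_2_distinct_neighbours[OF G T S u(2) _ big] u(2)
    by (metis card_2_iff insertI1 degree_def)
  define x where "x = other_end tail head u e1"
  define y where "y = other_end tail head u e2"
  have e12E: "e1 \<in> E" "e2 \<in> E" "tail e1 = u \<or> head e1 = u" "tail e2 = u \<or> head e2 = u"
    using e12 by (auto simp: delta_def)
  have jx: "joins tail head e1 u x" and jy: "joins tail head e2 u y"
    using e12E nl by (auto simp: x_def y_def other_end_def)
  have xy: "x \<noteq> y" using e12(3) by (simp add: x_def y_def)
  have root_nbrs: "degree E tail head (other_end tail head u e) \<noteq> 2" if "e \<in> delta E tail head u" for e
  proof
    assume d2: "degree E tail head (other_end tail head u e) = 2"
    have "e = e1 \<or> e = e2" using that e12 by auto
    then show False
    proof
      assume "e = e1"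
      then have "degree E tail head x = 2" using d2 by (simp add: x_def)
      moreover have "e1 \<in> delta E tail head x" using jx e12E by (auto simp: delta_def)
      ultimately obtain e3 where "delta E tail head x = {e1, e3}" "e1 \<noteq> e3"
        using degree_2_distinct_neighbours[OF G T S _ _ big] by metis
      then show False using root[OF e12(1,2) jx jy xy] none by blast
    next
      assume "e = e2"
      then have "degree E tail head y = 2" using d2 by (simp add: y_def)
      moreover have "e2 \<in> delta E tail head y" using jy e12E by (auto simp: delta_def)
      ultimately obtain e3 where "delta E tail head y = {e2, e3}" "e2 \<noteq> e3"
        using degree_2_distinct_neighbours[OF G T S _ _ big] by metis
      moreover have "delta E tail head u = {e2, e1}" using e12(1) by (simp add: insert_commute)
      ultimately show False using root[OF _ e12(2)[symmetric] jy jx xy[symmetric]] none by blast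
    qed
  qed
  have deg3: "degree E tail head w = 3" if "w \<in> V" "w \<noteq> u" for w
    using degree_3_off_root[OF P big root_nbrs _ _ that] contract vertex[OF N] none by blast
  have "\<mu> w = 0" if "w \<in> V" "w \<noteq> u" for w using ii deg3 that by fastforce
  moreover have "\<mu> u = 0"
    using sum0 calculation fin u(1) by (simp add: sum.remove)
  ultimately have "\<forall>v\<in>V. \<mu> v = 0" by blast
  then show False
    using edge[OF N e0] deg3 e0 ends none by blast
qed

section \<open>The induction\<close>

lemma extendable_step:
  fixes V :: "'v set" and E :: "'e set"
  assumes P: "extension_problem V E tail head u \<mu> \<psi>\<^sub>2 \<psi>\<^sub>3"
    and IH: "\<And>(V' :: 'v set) (E' :: 'e set) tail' head' u' \<mu>' \<psi>\<^sub>2' \<psi>\<^sub>3'. card E' < card E \<Longrightarrow>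
      extension_problem V' E' tail' head' u' \<mu>' \<psi>\<^sub>2' \<psi>\<^sub>3' \<Longrightarrow> extendable V' E' tail' head' u' \<mu>' \<psi>\<^sub>2' \<psi>\<^sub>3'"
  shows "extendable V E tail head u \<mu> \<psi>\<^sub>2 \<psi>\<^sub>3"
proof (cases "E \<subseteq> delta E tail head u")
  case True
  then show ?thesis using extendable_two_vertices[OF P] by blast
next
  case False
  have G: "oriented_graph V E tail head" using P by (simp add: extension_problem_def)
  then have fin: "finite E" and ends: "\<forall>e\<in>E. tail e \<in> V \<and> head e \<in> V"
    and nl: "\<forall>e\<in>E. tail e \<noteq> head e"
    by (auto simp: oriented_graph_def)
  show ?thesis
  proof (cases rule: reducible_configuration[OF P False, case_names two_cut root contract vertex edge])
    case (two_cut X ea eb)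
    have b: "tail eb \<in> V - X" using two_cut by blast
    have "card (quotient_edges E tail head (collapse (V - X) (tail eb))) < card E"
      using two_cut by (intro card_quotient_edges_less[OF fin, of eb]) (auto simp: collapse_def)
    then obtain \<phi>\<^sub>2 \<phi>\<^sub>3 where inner: "is_extension (insert (tail eb) X)
        (quotient_edges E tail head (collapse (V - X) (tail eb)))
        (collapse (V - X) (tail eb) \<circ> tail) (collapse (V - X) (tail eb) \<circ> head) u
        (collapse_weight (V - X) (tail eb) \<mu>) \<psi>\<^sub>2 \<psi>\<^sub>3 \<phi>\<^sub>2 \<phi>\<^sub>3"
      using IH extension_problem_split_inner[OF P two_cut(1-3) b] by blast
    have "card (quotient_edges E tail head (collapse X u)) < card E"
      using two_cut by (intro card_quotient_edges_less[OF fin, of ea]) (auto simp: collapse_def)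
    then obtain \<phi>\<^sub>2' \<phi>\<^sub>3' where "is_extension (insert u (V - X)) (quotient_edges E tail head (collapse X u))
        (collapse X u \<circ> tail) (collapse X u \<circ> head) u (collapse_weight X u \<mu>) \<phi>\<^sub>2 \<phi>\<^sub>3 \<phi>\<^sub>2' \<phi>\<^sub>3'"
      using IH extension_problem_split_outer[OF P two_cut(1-3) b inner] by blast
    then show ?thesis using is_extension_glue[OF P two_cut(1,2) b inner] by blast
  next
    case (root e1 e2 e3 x y)
    have "card (quotient_edges E tail head (collapse {u} x)) < card E"
      using root(1,3) by (intro card_quotient_edges_less[OF fin, of e1]) (auto simp: delta_def collapse_def)
    then obtain \<phi>\<^sub>2 \<phi>\<^sub>3 where "is_extension (V - {u}) (quotient_edges E tail head (collapse {u} x))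
        (collapse {u} x \<circ> tail) (collapse {u} x \<circ> head) x (collapse_weight {u} x \<mu>)
        (\<psi>\<^sub>2(e3 := if \<mu> x = 0 then \<psi>\<^sub>2 e1 else if \<mu> u + \<mu> x = 0 then bnd E tail head \<psi>\<^sub>2 u + \<psi>\<^sub>2 e1 else 1))
        (\<psi>\<^sub>3(e3 := incidence tail head x e3 * (\<mu> x - incidence tail head x e1 * \<psi>\<^sub>3 e1))) \<phi>\<^sub>2 \<phi>\<^sub>3"
      using IH extension_problem_contract_root_edge[OF P root] by blast
    moreover note bnd_root_values(1)[OF fin root(6,7) nl, where \<mu> = \<mu> and \<psi>\<^sub>3 = \<psi>\<^sub>3]
      bnd_root_values(2)[OF fin root(6,7) nl, where \<mu> = \<mu> and u = u and \<psi>\<^sub>2 = \<psi>\<^sub>2]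
    ultimately show ?thesis using is_extension_expand_root_edge[OF P root] by blast
  next
    case (contract v f g p q)
    have "card (quotient_edges E tail head (collapse {v} p)) < card E"
      using contract(3,4) by (intro card_quotient_edges_less[OF fin, of f]) (auto simp: delta_def collapse_def)
    then obtain \<phi>\<^sub>2 \<phi>\<^sub>3 where "is_extension (V - {v}) (quotient_edges E tail head (collapse {v} p))
        (collapse {v} p \<circ> tail) (collapse {v} p \<circ> head) u (collapse_weight {v} p \<mu>) \<psi>\<^sub>2 \<psi>\<^sub>3 \<phi>\<^sub>2 \<phi>\<^sub>3"
      using IH extension_problem_contract_edge[OF P contract] by blast
    then show ?thesis using is_extension_expand_edge[OF G contract] by blast
  next
    case (vertex s f g p q)
    have "card (E - {f, g}) < card E"
      using vertex(3) fin by (intro psubset_card_mono) (auto simp: delta_def)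
    then obtain \<phi>\<^sub>2 \<phi>\<^sub>3 where "is_extension (V - {s}) (E - {f, g}) tail head u
        (\<mu>(s := 0, p := - \<mu> s, q := - \<mu> s)) \<psi>\<^sub>2 \<psi>\<^sub>3 \<phi>\<^sub>2 \<phi>\<^sub>3"
      using IH extension_problem_delete_vertex[OF P vertex(1-12)] by blast
    moreover have "\<mu> p = 0" "\<mu> q = 0"
    proof -
      have "f \<in> E" "g \<in> E" using vertex(3) by (auto simp: delta_def)
      then have "p \<in> V" "q \<in> V" using vertex(5,6) ends by auto
      then show "\<mu> p = 0" "\<mu> q = 0" using P vertex(11,12) by (auto simp: extension_problem_def)
    qed
    ultimately show ?thesis
      using is_extension_restore_vertex[where \<mu> = \<mu>, OF G vertex(2-10) vertex(13)] by blast
  next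
    case (edge e0)
    have "card (E - {e0}) < card E" using edge(2) fin by (intro psubset_card_mono) auto
    then obtain \<phi>\<^sub>2 \<phi>\<^sub>3 where "is_extension V (E - {e0}) tail head u (\<lambda>w. - incidence tail head w e0)
        \<psi>\<^sub>2 \<psi>\<^sub>3 \<phi>\<^sub>2 \<phi>\<^sub>3"
      using IH extension_problem_delete_edge[OF P edge(1-7)] by blast
    then show ?thesis using is_extension_insert_edge[OF G edge(2-4,7)] by blast
  qed
qed

lemma extendable:
  fixes V :: "'v set" and E :: "'e set"
  shows "extension_problem V E tail head u \<mu> \<psi>\<^sub>2 \<psi>\<^sub>3 \<Longrightarrow> extendable V E tail head u \<mu> \<psi>\<^sub>2 \<psi>\<^sub>3"
proof (induction "card E" arbitrary: V E tail head u \<mu> \<psi>\<^sub>2 \<psi>\<^sub>3 rule: less_induct)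
  case less
  show ?case by (rule extendable_step[OF less.prems less.hyps])
qed

theorem mainTheorem2:
  fixes V :: "'v set" and E :: "'e set" and tail head :: "'e \<Rightarrow> 'v" and u :: 'v
    and \<mu> :: "'v \<Rightarrow> 3" and \<psi>\<^sub>2 :: "'e \<Rightarrow> 2" and \<psi>\<^sub>3 :: "'e \<Rightarrow> 3"
  assumes G: "oriented_graph V E tail head"
    and tec: "two_edge_connected V E tail head"
    and sub: "subcubic V E tail head"
    and u: "u \<in> V" "degree E tail head u = 2"
    and i: "(\<Sum>v\<in>V. \<mu> v) = 0"
    and ii: "\<forall>v\<in>V. \<mu> v \<noteq> 0 \<longrightarrow> degree E tail head v = 2"
    and iii: "boundary E tail head \<psi>\<^sub>3 u = \<mu> u"
    and iv: "\<mu> u = 0 \<longrightarrow> boundary E tail head \<psi>\<^sub>2 u = 0"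
    and v: "\<forall>e\<in>delta E tail head u. (\<psi>\<^sub>2 e, \<psi>\<^sub>3 e) \<noteq> (0, 0)"
  shows "\<exists>(\<phi>\<^sub>2 :: 'e \<Rightarrow> 2) (\<phi>\<^sub>3 :: 'e \<Rightarrow> 3).
           (\<forall>e\<in>delta E tail head u. \<phi>\<^sub>2 e = \<psi>\<^sub>2 e \<and> \<phi>\<^sub>3 e = \<psi>\<^sub>3 e)
         \<and> (\<forall>v\<in>V. boundary E tail head \<phi>\<^sub>3 v = \<mu> v)
         \<and> (\<forall>v\<in>V. \<mu> v = 0 \<longrightarrow> boundary E tail head \<phi>\<^sub>2 v = 0)
         \<and> (\<forall>e\<in>E. (\<phi>\<^sub>2 e, \<phi>\<^sub>3 e) \<noteq> (0, 0))"
proof -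
  have fin: "finite E" using G by (simp add: oriented_graph_def)
  have "extension_problem V E tail head u \<mu> \<psi>\<^sub>2 \<psi>\<^sub>3"
    unfolding extension_problem_def using G tec sub u i ii iii iv v by (simp add: boundary_eq_bnd[OF fin])
  then obtain \<phi>\<^sub>2 \<phi>\<^sub>3 where "is_extension V E tail head u \<mu> \<psi>\<^sub>2 \<psi>\<^sub>3 \<phi>\<^sub>2 \<phi>\<^sub>3"
    by (blast dest: extendable)
  then show ?thesis
    unfolding is_extension_def by (intro exI[of _ \<phi>\<^sub>2] exI[of _ \<phi>\<^sub>3]) (simp add: boundary_eq_bnd[OF fin])
qed

end
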